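(* If $G$ is a connected locally finite quasi-transitive graph with exactly $2$ ends, then there exists a periodic proper edge-coloring of $G$ with $\chi'(G)$ colors.
   Context: A graph is locally finite if every vertex has finite degree; quasi-transitive if $V(G)$ has finitely many orbits under $\mathrm{Aut}(G)$. Ends are equivalence classes of rays (infinite one-way paths), two rays being equivalent if there are infinitely many disjoint paths between them. $\chi'(G)$ is the chromatic index, the minimum number of colors in a proper edge-coloring (adjacent edges get distinct colors). An edge-coloring is periodic if the subgroup of automorphisms of $G$ mapping every edge to an edge of the same color has finitely many orbits on $V(G)$. *)

theory Defs
  imports Main
begin

definition graph :: "'a set \<Rightarrow> ('a \<Rightarrow> 'a \<Rightarrow> bool) \<Rightarrow> bool" where
  "graph V adj \<longleftrightarrow> (\<forall>u v. adj u v \<longrightarrow> u \<in> V \<and> v \<in> V \<and> u \<noteq> v \<and> adj v u)"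

definition edges :: "'a set \<Rightarrow> ('a \<Rightarrow> 'a \<Rightarrow> bool) \<Rightarrow> 'a set set" where
  "edges V adj = {{u, v} | u v. u \<in> V \<and> v \<in> V \<and> adj u v}"

definition locally_finite :: "'a set \<Rightarrow> ('a \<Rightarrow> 'a \<Rightarrow> bool) \<Rightarrow> bool" where
  "locally_finite V adj \<longleftrightarrow> (\<forall>v\<in>V. finite {u. adj v u})"

definition connected_graph :: "'a set \<Rightarrow> ('a \<Rightarrow> 'a \<Rightarrow> bool) \<Rightarrow> bool" where
  "connected_graph V adj \<longleftrightarrow> V \<noteq> {} \<and> (\<forall>u\<in>V. \<forall>v\<in>V. adj\<^sup>*\<^sup>* u v)"

definition automorphism :: "'a set \<Rightarrow> ('a \<Rightarrow> 'a \<Rightarrow> bool) \<Rightarrow> ('a \<Rightarrow> 'a) \<Rightarrow> bool" where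
  "automorphism V adj f \<longleftrightarrow> bij_betw f V V \<and> (\<forall>u\<in>V. \<forall>v\<in>V. adj u v \<longleftrightarrow> adj (f u) (f v))"

definition orbits :: "'a set \<Rightarrow> ('a \<Rightarrow> 'a) set \<Rightarrow> 'a set set" where
  "orbits V F = {{f v | f. f \<in> F} | v. v \<in> V}"

definition quasi_transitive :: "'a set \<Rightarrow> ('a \<Rightarrow> 'a \<Rightarrow> bool) \<Rightarrow> bool" where
  "quasi_transitive V adj \<longleftrightarrow> finite (orbits V {f. automorphism V adj f})"

definition ray :: "'a set \<Rightarrow> ('a \<Rightarrow> 'a \<Rightarrow> bool) \<Rightarrow> (nat \<Rightarrow> 'a) \<Rightarrow> bool" where
  "ray V adj r \<longleftrightarrow> inj r \<and> range r \<subseteq> V \<and> (\<forall>n. adj (r n) (r (Suc n)))"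

definition gpath :: "'a set \<Rightarrow> ('a \<Rightarrow> 'a \<Rightarrow> bool) \<Rightarrow> 'a list \<Rightarrow> bool" where
  "gpath V adj p \<longleftrightarrow> p \<noteq> [] \<and> distinct p \<and> set p \<subseteq> V \<and>
     (\<forall>i. Suc i < length p \<longrightarrow> adj (p ! i) (p ! Suc i))"

definition ray_equiv :: "'a set \<Rightarrow> ('a \<Rightarrow> 'a \<Rightarrow> bool) \<Rightarrow> (nat \<Rightarrow> 'a) \<Rightarrow> (nat \<Rightarrow> 'a) \<Rightarrow> bool" where
  "ray_equiv V adj r s \<longleftrightarrow> (\<exists>P. infinite P \<and>
     (\<forall>p\<in>P. gpath V adj p \<and> hd p \<in> range r \<and> last p \<in> range s) \<and>
     (\<forall>p\<in>P. \<forall>q\<in>P. p \<noteq> q \<longrightarrow> set p \<inter> set q = {}))"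

definition ends :: "'a set \<Rightarrow> ('a \<Rightarrow> 'a \<Rightarrow> bool) \<Rightarrow> (nat \<Rightarrow> 'a) set set" where
  "ends V adj = {{s. ray V adj s \<and> ray_equiv V adj r s} | r. ray V adj r}"

definition proper_edge_coloring :: "'a set \<Rightarrow> ('a \<Rightarrow> 'a \<Rightarrow> bool) \<Rightarrow> ('a set \<Rightarrow> nat) \<Rightarrow> bool" where
  "proper_edge_coloring V adj c \<longleftrightarrow>
     (\<forall>e\<in>edges V adj. \<forall>e'\<in>edges V adj. e \<noteq> e' \<and> e \<inter> e' \<noteq> {} \<longrightarrow> c e \<noteq> c e')"

definition chromatic_index :: "'a set \<Rightarrow> ('a \<Rightarrow> 'a \<Rightarrow> bool) \<Rightarrow> nat" where
  "chromatic_index V adj = (LEAST k. \<exists>c. proper_edge_coloring V adj c \<and> c ` edges V adj \<subseteq> {..<k})"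

definition periodic_coloring :: "'a set \<Rightarrow> ('a \<Rightarrow> 'a \<Rightarrow> bool) \<Rightarrow> ('a set \<Rightarrow> nat) \<Rightarrow> bool" where
  "periodic_coloring V adj c \<longleftrightarrow>
     finite (orbits V {f. automorphism V adj f \<and> (\<forall>e\<in>edges V adj. c (f ` e) = c e)})"

end

(*
  A two-ended quasi-transitive graph is a thickened line.  Fix a finite connected set S separating
  the two ends.  Quasi-transitivity gives an automorphism g that fixes both ends and moves S into
  the side A of one end; then g A \<subseteq> A and A - g A is finite, so the powers of g act as
  translations, and the level of v, the n with v \<in> g^n A - g^(n+1) A, has finite level sets and
  changes by at most one along edges.  Start from any colouring with \<chi>'(G) colours.  It induces
  only finitely many colourings on a window of three levels, so two translates of the window by
  g^i and g^j carry the same colours; cutting the levels into strips of width p = j - i and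
  colouring every strip like one of them gives a proper colouring with \<chi>'(G) colours that is
  invariant under g^p, hence periodic.
*)
theory Submission
  imports Defs "HOL-Library.FuncSet"
begin

lemma finite_range_repeats:
  fixes f :: "nat \<Rightarrow> 'b"
  assumes "range f \<subseteq> B" "finite B"
  obtains i j where "i < j" "f i = f j"
proof -
  have "\<not> inj f" using assms infinite_iff_countable_subset finite_subset by blast
  then obtain i j where "i \<noteq> j" "f i = f j" unfolding inj_def by blast
  then show ?thesis using that[of i j] that[of j i] by (cases "i < j") auto
qed

lemma infinite_pairwise_disjoint_avoids:
  assumes "infinite P" and "pairwise (\<lambda>p q. set p \<inter> set q = {}) P" and "finite F"
  shows "\<exists>p\<in>P. set p \<inter> F = {}"
proof -
  have "finite {p\<in>P. x \<in> set p}" for x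
  proof (rule finite_subset)
    show "{p\<in>P. x \<in> set p} \<subseteq> {SOME p. p \<in> P \<and> x \<in> set p}"
      using assms(2) by (auto simp: pairwise_def intro: someI2)
  qed simp
  then have "finite (\<Union>x\<in>F. {p\<in>P. x \<in> set p})"
    using assms(3) by blast
  moreover have "{p\<in>P. set p \<inter> F \<noteq> {}} \<subseteq> (\<Union>x\<in>F. {p\<in>P. x \<in> set p})"
    by blast
  ultimately have "finite {p\<in>P. set p \<inter> F \<noteq> {}}"
    by (rule finite_subset[rotated])
  then have "P - {p\<in>P. set p \<inter> F \<noteq> {}} \<noteq> {}"
    using assms(1) by (metis finite_Diff2 finite.emptyI)
  then show ?thesis by blast
qed

lemma disjoint_list_sequence:
  assumes avoid: "\<And>F. finite F \<Longrightarrow> \<exists>p. Q p \<and> p \<noteq> [] \<and> set p \<inter> F = {}"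
  obtains p :: "nat \<Rightarrow> 'a list"
  where "\<And>n. Q (p n) \<and> p n \<noteq> []" "\<And>m n. m < n \<Longrightarrow> set (p m) \<inter> set (p n) = {}"
proof -
  \<comment> \<open>Pair each list with a finite set containing all elements used so far; the next list avoids it.\<close>
  have "\<exists>f. \<forall>n. (Q (fst (f n)) \<and> fst (f n) \<noteq> [] \<and> finite (snd (f n)) \<and> set (fst (f n)) \<subseteq> snd (f n))
      \<and> (set (fst (f (Suc n))) \<inter> snd (f n) = {} \<and> snd (f n) \<subseteq> snd (f (Suc n)))"
  proof (rule dependent_nat_choice)
    obtain p where "Q p" "p \<noteq> []" using avoid[of "{}"] by blast
    then show "\<exists>x. Q (fst x) \<and> fst x \<noteq> [] \<and> finite (snd x) \<and> set (fst x) \<subseteq> snd x"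
      by (intro exI[of _ "(p, set p)"]) simp
  next
    fix x :: "'a list \<times> 'a set" and n
    assume x: "Q (fst x) \<and> fst x \<noteq> [] \<and> finite (snd x) \<and> set (fst x) \<subseteq> snd x"
    then obtain p where "Q p" "p \<noteq> []" "set p \<inter> snd x = {}" using avoid by blast
    then show "\<exists>y. (Q (fst y) \<and> fst y \<noteq> [] \<and> finite (snd y) \<and> set (fst y) \<subseteq> snd y)
        \<and> (set (fst y) \<inter> snd x = {} \<and> snd x \<subseteq> snd y)"
      using x by (intro exI[of _ "(p, snd x \<union> set p)"]) auto
  qed
  then obtain f where f: "\<forall>n. (Q (fst (f n)) \<and> fst (f n) \<noteq> [] \<and> finite (snd (f n)) \<and> set (fst (f n)) \<subseteq> snd (f n))
      \<and> (set (fst (f (Suc n))) \<inter> snd (f n) = {} \<and> snd (f n) \<subseteq> snd (f (Suc n)))"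
    by blast
  define p where "p n = fst (f n)" for n
  define U where "U n = snd (f n)" for n
  have pU: "Q (p n) \<and> p n \<noteq> [] \<and> set (p n) \<subseteq> U n"
    and fresh: "set (p (Suc n)) \<inter> U n = {}" and grow: "U n \<subseteq> U (Suc n)" for n
    using f[rule_format, of n] unfolding p_def U_def by simp_all
  have "set (p m) \<inter> set (p n) = {}" if "m < n" for m n
  proof -
    have "U m \<subseteq> U (n - 1)" using that by (intro lift_Suc_mono_le[of U, OF grow]) simp
    then show ?thesis using fresh[of "n - 1"] pU[of m] that by auto
  qed
  then show ?thesis using that pU by blast
qed

lemma infinite_pairwise_disjoint_family:
  assumes "\<And>F. finite F \<Longrightarrow> \<exists>p. Q p \<and> p \<noteq> [] \<and> set p \<inter> F = {}"
  shows "\<exists>P. infinite P \<and> (\<forall>p\<in>P. Q p) \<and> pairwise (\<lambda>p q. set p \<inter> set q = {}) P"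
proof -
  obtain p :: "nat \<Rightarrow> 'a list" where p: "\<And>n. Q (p n) \<and> p n \<noteq> []"
    and earlier: "\<And>m n. m < n \<Longrightarrow> set (p m) \<inter> set (p n) = {}"
    using disjoint_list_sequence[OF assms] by blast
  have disjoint: "set (p m) \<inter> set (p n) = {}" if "m \<noteq> n" for m n
    using that earlier[of m n] earlier[of n m] by (cases m n rule: linorder_cases) auto
  then have "inj p" using p by (metis Int_absorb injI set_empty)
  then have "infinite (range p)" using infinite_iff_countable_subset by blast
  moreover have "pairwise (\<lambda>p q. set p \<inter> set q = {}) (range p)"
    unfolding pairwise_def using disjoint by (metis imageE)
  ultimately show ?thesis using p by blast
qed

abbreviation eventually_in :: "(nat \<Rightarrow> 'a) \<Rightarrow> 'a set \<Rightarrow> bool" where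
  "eventually_in q D \<equiv> \<forall>\<^sub>F n in sequentially. q n \<in> D"

locale connected_lf_graph =
  fixes V :: "'a set" and adj :: "'a \<Rightarrow> 'a \<Rightarrow> bool"
  assumes is_graph: "graph V adj" and is_connected: "connected_graph V adj"
    and is_locally_finite: "locally_finite V adj"
begin

lemma adj_vertices: "adj u v \<Longrightarrow> u \<in> V \<and> v \<in> V"
  using is_graph unfolding graph_def by blast

lemma adj_sym: "adj u v \<Longrightarrow> adj v u"
  using is_graph unfolding graph_def by blast

lemma finite_neighbours: "finite {v. adj u v}"
proof (cases "u \<in> V")
  case False
  then have "{v. adj u v} = {}" using adj_vertices by blast
  then show ?thesis by simp
qed (use is_locally_finite in \<open>simp add: locally_finite_def\<close>)

lemma reachable: "u \<in> V \<Longrightarrow> v \<in> V \<Longrightarrow> adj\<^sup>*\<^sup>* u v"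
  using is_connected unfolding connected_graph_def by blast

definition adj_within :: "'a set \<Rightarrow> 'a \<Rightarrow> 'a \<Rightarrow> bool" where
  "adj_within X u v \<longleftrightarrow> adj u v \<and> u \<in> X \<and> v \<in> X"

text \<open>For x \<notin> X this is the junk value {x}.\<close>
definition component :: "'a set \<Rightarrow> 'a \<Rightarrow> 'a set" where
  "component X x = {y. (adj_within X)\<^sup>*\<^sup>* x y}"

lemma walk_within_mono: "X \<subseteq> Y \<Longrightarrow> (adj_within X)\<^sup>*\<^sup>* x y \<Longrightarrow> (adj_within Y)\<^sup>*\<^sup>* x y"
  using rtranclp_mono[of "adj_within X" "adj_within Y"] unfolding adj_within_def by blast

lemma walk_within_sym: "(adj_within X)\<^sup>*\<^sup>* x y \<Longrightarrow> (adj_within X)\<^sup>*\<^sup>* y x"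
proof -
  have "symp (adj_within X)"
    using adj_sym unfolding adj_within_def by (auto intro: sympI)
  then show "(adj_within X)\<^sup>*\<^sup>* x y \<Longrightarrow> (adj_within X)\<^sup>*\<^sup>* y x"
    using symp_rtranclp sympD by metis
qed

lemma walk_within_endpoints: "(adj_within X)\<^sup>*\<^sup>* x y \<Longrightarrow> x = y \<or> (x \<in> X \<and> y \<in> X)"
  by (induction rule: rtranclp_induct) (auto simp: adj_within_def)

lemma walk_in_V: "adj\<^sup>*\<^sup>* x y \<Longrightarrow> (adj_within V)\<^sup>*\<^sup>* x y"
  by (induction rule: rtranclp_induct)
    (auto simp: adj_within_def dest: adj_vertices intro: rtranclp.rtrancl_into_rtrancl)

lemma component_self [simp]: "x \<in> component X x"
  by (simp add: component_def)

lemma component_eq: "y \<in> component X x \<Longrightarrow> component X y = component X x"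
  unfolding component_def using walk_within_sym by (blast intro: rtranclp_trans)

lemma component_sym: "y \<in> component X x \<Longrightarrow> x \<in> component X y"
  unfolding component_def using walk_within_sym by blast

lemma component_subset: "x \<in> X \<Longrightarrow> component X x \<subseteq> X"
  unfolding component_def using walk_within_endpoints by blast

lemma component_mono: "X \<subseteq> Y \<Longrightarrow> component X x \<subseteq> component Y x"
  unfolding component_def using walk_within_mono by blast

lemma component_step: "y \<in> component X x \<Longrightarrow> adj_within X y z \<Longrightarrow> z \<in> component X x"
  unfolding component_def by (simp add: rtranclp.rtrancl_into_rtrancl)

lemma components_disjoint:
  "component X x \<noteq> component X y \<Longrightarrow> component X x \<inter> component X y = {}"
  using component_eq by blast

lemma component_boundary:
  assumes "u \<in> component (V - S) x" "x \<in> V - S" "adj u v"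
  shows "v \<in> component (V - S) x \<union> S"
  using assms component_subset[of x "V - S"] adj_vertices component_step
  unfolding adj_within_def by blast

lemma walk_within_component:
  assumes "y \<in> component X x"
  shows "(adj_within (component X x))\<^sup>*\<^sup>* x y"
proof -
  have "(adj_within X)\<^sup>*\<^sup>* x y" using assms unfolding component_def by simp
  then show ?thesis
  proof (induction rule: rtranclp_induct)
    case (step y z)
    then have "adj_within (component X x) y z"
      unfolding component_def adj_within_def by (auto intro: rtranclp.rtrancl_into_rtrancl)
    then show ?case using step.IH by (simp add: rtranclp.rtrancl_into_rtrancl)
  qed simp
qed

lemma ray_range_component: "ray V adj q \<Longrightarrow> range q \<subseteq> X \<Longrightarrow> range q \<subseteq> component X (q 0)"
proof -
  assume q: "ray V adj q" and X: "range q \<subseteq> X"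
  have "q n \<in> component X (q 0)" for n
  proof (induction n)
    case (Suc n)
    have "adj_within X (q n) (q (Suc n))" using q X unfolding ray_def adj_within_def by auto
    then show ?case using Suc component_step by blast
  qed simp
  then show ?thesis by blast
qed

lemma gpath_walk_within:
  assumes p: "gpath V adj p" and X: "set p \<subseteq> X" and s: "s \<in> set p"
  shows "(adj_within X)\<^sup>*\<^sup>* (hd p) s"
proof -
  have "(adj_within X)\<^sup>*\<^sup>* (hd p) (p ! i)" if "i < length p" for i
    using that
  proof (induction i)
    case 0 then show ?case using p by (simp add: gpath_def hd_conv_nth)
  next
    case (Suc i)
    then have "adj_within X (p ! i) (p ! Suc i)"
      using p X unfolding gpath_def adj_within_def by (auto dest: nth_mem)
    then show ?case using Suc by (simp add: rtranclp.rtrancl_into_rtrancl)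
  qed
  then show ?thesis using s by (metis in_set_conv_nth)
qed

lemma walk_within_imp_gpath:
  assumes "(adj_within X)\<^sup>*\<^sup>* x y" "x \<in> X" "X \<subseteq> V"
  shows "\<exists>p. gpath V adj p \<and> hd p = x \<and> last p = y \<and> set p \<subseteq> X"
  using assms
proof (induction rule: converse_rtranclp_induct)
  case base
  then show ?case by (intro exI[of _ "[y]"]) (auto simp: gpath_def)
next
  case (step x x')
  then have x': "x' \<in> X" and "adj x x'" unfolding adj_within_def by auto
  obtain p where p: "gpath V adj p" "hd p = x'" "last p = y" "set p \<subseteq> X"
    using step.IH x' step.prems by blast
  show ?case
  proof (cases "x \<in> set p")
    case True
    then obtain k where k: "k < length p" "p ! k = x" by (meson in_set_conv_nth)
    have "gpath V adj (drop k p)"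
      using p(1) k unfolding gpath_def by (auto simp: nth_drop dest: in_set_dropD)
    then show ?thesis
      using k p(3,4) by (intro exI[of _ "drop k p"]) (auto simp: hd_drop_conv_nth dest: in_set_dropD)
  next
    case False
    have "p \<noteq> []" using p(1) unfolding gpath_def by simp
    then have "gpath V adj (x # p)"
      using False p(1,2) \<open>adj x x'\<close> step.prems unfolding gpath_def
      by (auto simp: nth_Cons hd_conv_nth split: nat.splits)
    then show ?thesis using p(3,4) \<open>p \<noteq> []\<close> step.prems by (intro exI[of _ "x # p"]) auto
  qed
qed

lemma automorphism_vertex: "automorphism V adj f \<Longrightarrow> x \<in> V \<Longrightarrow> f x \<in> V"
  unfolding automorphism_def bij_betw_def by blast

lemma automorphism_inj: "automorphism V adj f \<Longrightarrow> inj_on f V"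
  unfolding automorphism_def bij_betw_def by blast

lemma automorphism_image: "automorphism V adj f \<Longrightarrow> f ` V = V"
  unfolding automorphism_def bij_betw_def by blast

lemma automorphism_adj: "automorphism V adj f \<Longrightarrow> adj u v \<Longrightarrow> adj (f u) (f v)"
  unfolding automorphism_def using adj_vertices by blast

lemma automorphism_inv_left: "automorphism V adj f \<Longrightarrow> x \<in> V \<Longrightarrow> inv_into V f (f x) = x"
  using automorphism_inj by (simp add: inv_into_f_f)

lemma automorphism_inv_right: "automorphism V adj f \<Longrightarrow> y \<in> V \<Longrightarrow> f (inv_into V f y) = y"
  using automorphism_image by (metis f_inv_into_f)

lemma automorphism_adj_iff:
  "automorphism V adj f \<Longrightarrow> u \<in> V \<Longrightarrow> v \<in> V \<Longrightarrow> adj (f u) (f v) \<longleftrightarrow> adj u v"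
  unfolding automorphism_def by blast

lemma automorphism_inv: "automorphism V adj f \<Longrightarrow> automorphism V adj (inv_into V f)"
proof -
  assume f: "automorphism V adj f"
  have bij: "bij_betw (inv_into V f) V V"
    using f unfolding automorphism_def by (simp add: bij_betw_inv_into)
  have "adj u v \<longleftrightarrow> adj (inv_into V f u) (inv_into V f v)" if "u \<in> V" "v \<in> V" for u v
  proof -
    have "inv_into V f u \<in> V" "inv_into V f v \<in> V" using bij that unfolding bij_betw_def by auto
    then show ?thesis using automorphism_adj_iff[OF f] automorphism_inv_right[OF f] that by metis
  qed
  then show ?thesis using bij unfolding automorphism_def by blast
qed

lemma automorphism_comp:
  assumes f: "automorphism V adj f" and g: "automorphism V adj g"
  shows "automorphism V adj (f \<circ> g)"
proof -
  have "bij_betw (f \<circ> g) V V"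
    using f g unfolding automorphism_def by (blast intro: bij_betw_trans)
  moreover have "\<forall>u\<in>V. \<forall>v\<in>V. adj u v \<longleftrightarrow> adj ((f \<circ> g) u) ((f \<circ> g) v)"
    using automorphism_adj_iff[OF f] automorphism_adj_iff[OF g] automorphism_vertex[OF g] by simp
  ultimately show ?thesis unfolding automorphism_def by blast
qed

lemma automorphism_id: "automorphism V adj id"
  unfolding automorphism_def by simp

lemma automorphism_funpow: "automorphism V adj f \<Longrightarrow> automorphism V adj (f ^^ k)"
proof (induction k)
  case 0 then show ?case using automorphism_id by (simp add: id_def)
next
  case (Suc k)
  have "automorphism V adj (f \<circ> f ^^ k)" using automorphism_comp[OF Suc.prems Suc.IH[OF Suc.prems]] .
  then show ?case by (subst funpow.simps(2))
qed

lemma automorphism_edge: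
  assumes f: "automorphism V adj f" and e: "e \<in> edges V adj"
  shows "f ` e \<in> edges V adj"
proof -
  obtain u v where "e = {u, v}" "adj u v" using e unfolding edges_def by blast
  then have "f ` e = {f u, f v}" "adj (f u) (f v)" using automorphism_adj[OF f] by auto
  then show ?thesis using adj_vertices unfolding edges_def by blast
qed

lemma color_preserving_comp:
  assumes "automorphism V adj f" "\<forall>e\<in>edges V adj. c (f ` e) = c e"
    and "automorphism V adj f'" "\<forall>e\<in>edges V adj. c (f' ` e) = c e"
  shows "automorphism V adj (f \<circ> f') \<and> (\<forall>e\<in>edges V adj. c ((f \<circ> f') ` e) = c e)"
proof -
  have "c ((f \<circ> f') ` e) = c e" if "e \<in> edges V adj" for e
  proof -
    have "(f \<circ> f') ` e = f ` f' ` e" by (simp add: image_comp)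
    then show ?thesis using assms(2,4) automorphism_edge[OF assms(3) that] that by simp
  qed
  then show ?thesis using automorphism_comp[OF assms(1,3)] by blast
qed

lemma automorphism_walk_within:
  assumes f: "automorphism V adj f" and "(adj_within X)\<^sup>*\<^sup>* x y"
  shows "(adj_within (f ` X))\<^sup>*\<^sup>* (f x) (f y)"
  using assms(2)
proof (induction rule: rtranclp_induct)
  case (step y z)
  then have "adj_within (f ` X) (f y) (f z)"
    using automorphism_adj[OF f] unfolding adj_within_def by blast
  then show ?case using step.IH by (simp add: rtranclp.rtrancl_into_rtrancl)
qed simp

lemma automorphism_diff:
  assumes f: "automorphism V adj f" and T: "T \<subseteq> V"
  shows "f ` (V - T) = V - f ` T"
proof -
  have "f ` (V - T) = f ` V - f ` T" using inj_on_image_set_diff[OF automorphism_inj[OF f]] T by blast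
  then show ?thesis using automorphism_image[OF f] by simp
qed

lemma automorphism_component:
  assumes f: "automorphism V adj f" and T: "T \<subseteq> V"
  shows "f ` component (V - T) x \<subseteq> component (V - f ` T) (f x)"
proof
  fix y assume "y \<in> f ` component (V - T) x"
  then obtain z where "(adj_within (V - T))\<^sup>*\<^sup>* x z" "y = f z" unfolding component_def by blast
  then have "(adj_within (f ` (V - T)))\<^sup>*\<^sup>* (f x) y" using automorphism_walk_within[OF f] by blast
  then show "y \<in> component (V - f ` T) (f x)"
    unfolding component_def automorphism_diff[OF f T] by simp
qed

lemma automorphism_component_reflect:
  assumes f: "automorphism V adj f" and T: "T \<subseteq> V" and "x \<in> V" "y \<in> V"
    and "f y \<in> component (V - f ` T) (f x)"
  shows "y \<in> component (V - T) x"
proof -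
  let ?h = "inv_into V f"
  have "f ` T \<subseteq> V" using T automorphism_vertex[OF f] by blast
  then have "?h (f y) \<in> component (V - ?h ` f ` T) (?h (f x))"
    using automorphism_component[OF automorphism_inv[OF f]] assms(5) by blast
  moreover have "?h ` f ` T = T" using automorphism_inj[OF f] T by (simp add: inv_into_image_cancel)
  ultimately show ?thesis using automorphism_inv_left[OF f] assms(3,4) by simp
qed

lemma automorphism_ray:
  assumes f: "automorphism V adj f" and q: "ray V adj q"
  shows "ray V adj (f \<circ> q)"
proof -
  have "inj_on f (range q)" using automorphism_inj[OF f] q inj_on_subset unfolding ray_def by blast
  then have "inj (f \<circ> q)" using q comp_inj_on unfolding ray_def by blast
  moreover have "range (f \<circ> q) \<subseteq> V" using q automorphism_vertex[OF f] unfolding ray_def by auto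
  moreover have "adj ((f \<circ> q) n) ((f \<circ> q) (Suc n))" for n
    using q automorphism_adj[OF f] unfolding ray_def by simp
  ultimately show ?thesis unfolding ray_def by blast
qed

lemma automorphism_eventually_in:
  assumes f: "automorphism V adj f" and T: "T \<subseteq> V"
    and "eventually_in q (component (V - T) b)"
  shows "eventually_in (f \<circ> q) (component (V - f ` T) (f b))"
proof (rule eventually_mono[OF assms(3)])
  fix n assume "q n \<in> component (V - T) b"
  then show "(f \<circ> q) n \<in> component (V - f ` T) (f b)" using automorphism_component[OF f T] by auto
qed

definition same_end :: "(nat \<Rightarrow> 'a) \<Rightarrow> (nat \<Rightarrow> 'a) \<Rightarrow> bool" where
  "same_end q q' \<longleftrightarrow> (\<forall>T. finite T \<longrightarrow>
     (\<exists>a. eventually_in q (component (V - T) a) \<and> eventually_in q' (component (V - T) a)))"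

lemma ray_eventually_avoids:
  assumes "ray V adj q" "finite T"
  shows "\<forall>\<^sub>F n in sequentially. q n \<notin> T"
proof -
  have "finite (q -` T)" using assms unfolding ray_def by (simp add: finite_vimageI)
  then obtain N where "\<forall>n\<in>q -` T. n < N" using finite_nat_set_iff_bounded by blast
  then have "\<forall>n\<ge>N. q n \<notin> T" by (meson leD vimageI2)
  then show ?thesis unfolding eventually_sequentially by blast
qed

lemma ray_tail_component:
  assumes q: "ray V adj q" and T: "finite T"
  obtains N where "q N \<in> V - T" "eventually_in q (component (V - T) (q N))"
proof -
  obtain N where N: "\<forall>n\<ge>N. q n \<notin> T"
    using ray_eventually_avoids[OF q T] unfolding eventually_sequentially by blast
  have qV: "q n \<in> V" for n using q unfolding ray_def by auto
  have "q n \<in> component (V - T) (q N)" if "n \<ge> N" for n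
    using that
  proof (induction n rule: dec_induct)
    case (step n)
    have "adj_within (V - T) (q n) (q (Suc n))"
      using q N step.hyps qV unfolding adj_within_def ray_def by auto
    then show ?case using step.IH component_step by blast
  qed simp
  then show ?thesis using that N qV unfolding eventually_sequentially by blast
qed

lemma eventually_in_component_unique:
  assumes "eventually_in q (component X a)" "eventually_in q (component X b)"
  shows "b \<in> component X a"
proof -
  obtain n where "q n \<in> component X a" "q n \<in> component X b"
    using eventually_happens'[OF sequentially_bot eventually_conj[OF assms]] by blast
  then show ?thesis using component_eq component_sym by metis
qed

lemma same_end_refl:
  assumes "ray V adj q"
  shows "same_end q q"
  unfolding same_end_def
proof (intro allI impI)
  fix T :: "'a set" assume "finite T"
  then obtain N where "eventually_in q (component (V - T) (q N))"
    using ray_tail_component[OF assms] by blast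
  then show "\<exists>a. eventually_in q (component (V - T) a) \<and> eventually_in q (component (V - T) a)"
    by blast
qed

lemma same_end_sym: "same_end q q' \<Longrightarrow> same_end q' q"
  unfolding same_end_def by blast

lemma same_end_trans:
  assumes "same_end q q'" "same_end q' q''"
  shows "same_end q q''"
  unfolding same_end_def
proof (intro allI impI)
  fix T :: "'a set" assume T: "finite T"
  obtain a where a: "eventually_in q (component (V - T) a)" "eventually_in q' (component (V - T) a)"
    using assms(1) T unfolding same_end_def by blast
  obtain b where b: "eventually_in q' (component (V - T) b)" "eventually_in q'' (component (V - T) b)"
    using assms(2) T unfolding same_end_def by blast
  have "component (V - T) b = component (V - T) a"
    using eventually_in_component_unique[OF a(2) b(1)] by (rule component_eq)
  then show "\<exists>a. eventually_in q (component (V - T) a) \<and> eventually_in q'' (component (V - T) a)"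
    using a(1) b(2) by auto
qed

lemma same_end_components:
  assumes "same_end q q'" "finite T"
    and "eventually_in q (component (V - T) a)" "eventually_in q' (component (V - T) b)"
  shows "b \<in> component (V - T) a"
proof -
  obtain c where c: "eventually_in q (component (V - T) c)" "eventually_in q' (component (V - T) c)"
    using assms(1,2) unfolding same_end_def by blast
  have "a \<in> component (V - T) c" "b \<in> component (V - T) c"
    using eventually_in_component_unique c assms(3,4) by blast+
  then show ?thesis using component_eq by blast
qed

lemma ray_equiv_imp_same_end:
  assumes q: "ray V adj q" and q': "ray V adj q'" and "ray_equiv V adj q q'"
  shows "same_end q q'"
  unfolding same_end_def
proof (intro allI impI)
  fix T :: "'a set" assume T: "finite T"
  obtain N where N: "q N \<in> V - T" "eventually_in q (component (V - T) (q N))"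
    using ray_tail_component[OF q T] .
  obtain N' where N': "q' N' \<in> V - T" "eventually_in q' (component (V - T) (q' N'))"
    using ray_tail_component[OF q' T] .
  obtain P where P: "infinite P" "\<forall>p\<in>P. gpath V adj p \<and> hd p \<in> range q \<and> last p \<in> range q'"
    "pairwise (\<lambda>p p'. set p \<inter> set p' = {}) P"
    using assms(3) unfolding ray_equiv_def pairwise_def by blast
  \<comment> \<open>A path of P avoiding T joins the two tails, so they lie in one component of V - T.\<close>
  obtain M where M: "\<forall>n\<ge>M. q n \<in> component (V - T) (q N)"
    using N(2) unfolding eventually_sequentially by blast
  obtain M' where M': "\<forall>n\<ge>M'. q' n \<in> component (V - T) (q' N')"
    using N'(2) unfolding eventually_sequentially by blast
  have "finite (T \<union> q ` {..<M} \<union> q' ` {..<M'})" using T by simp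
  then obtain p where p: "p \<in> P" "set p \<inter> (T \<union> q ` {..<M} \<union> q' ` {..<M'}) = {}"
    by (metis infinite_pairwise_disjoint_avoids[OF P(1,3)])
  have gp: "gpath V adj p" "hd p \<in> range q" "last p \<in> range q'" using P(2) p(1) by auto
  then obtain i j where ij: "hd p = q i" "last p = q' j" by blast
  have ends: "hd p \<in> set p" "last p \<in> set p" using gp(1) unfolding gpath_def by auto
  then have "i \<ge> M" "j \<ge> M'" using p(2) ij by (auto simp: not_less[symmetric])
  then have "q i \<in> component (V - T) (q N)" "q' j \<in> component (V - T) (q' N')" using M M' by auto
  moreover have "set p \<subseteq> V - T" using gp(1) p(2) unfolding gpath_def by blast
  then have "(adj_within (V - T))\<^sup>*\<^sup>* (q i) (q' j)" using gpath_walk_within[OF gp(1)] ends ij by metis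
  ultimately have "q' j \<in> component (V - T) (q N)" "q' j \<in> component (V - T) (q' N')"
    unfolding component_def by (auto intro: rtranclp_trans)
  then have "component (V - T) (q' N') = component (V - T) (q N)" using component_eq by metis
  then show "\<exists>a. eventually_in q (component (V - T) a) \<and> eventually_in q' (component (V - T) a)"
    using N(2) N'(2) by auto
qed

lemma same_end_avoiding_path:
  assumes q: "ray V adj q" and q': "ray V adj q'" and "same_end q q'" and F: "finite F"
  shows "\<exists>p. gpath V adj p \<and> hd p \<in> range q \<and> last p \<in> range q' \<and> set p \<inter> F = {}"
proof -
  obtain a where "eventually_in q (component (V - F) a)" "eventually_in q' (component (V - F) a)"
    using assms(3) F unfolding same_end_def by blast
  then have "\<forall>\<^sub>F n in sequentially. q n \<in> component (V - F) a \<and> q n \<notin> F \<and> q' n \<in> component (V - F) a"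
    using ray_eventually_avoids[OF q F] by eventually_elim blast
  then obtain n where n: "q n \<in> component (V - F) a" "q n \<notin> F" "q' n \<in> component (V - F) a"
    using eventually_happens'[OF sequentially_bot] by blast
  have "q n \<in> V" using q unfolding ray_def by auto
  moreover have "(adj_within (V - F))\<^sup>*\<^sup>* (q n) (q' n)"
    using n(1,3) walk_within_sym unfolding component_def by (blast intro: rtranclp_trans)
  ultimately obtain p where "gpath V adj p" "hd p = q n" "last p = q' n" "set p \<subseteq> V - F"
    using walk_within_imp_gpath[of "V - F"] n(2) by blast
  then show ?thesis by blast
qed

lemma same_end_imp_ray_equiv:
  assumes "ray V adj q" "ray V adj q'" "same_end q q'"
  shows "ray_equiv V adj q q'"
proof -
  have "\<exists>P. infinite P \<and> (\<forall>p\<in>P. gpath V adj p \<and> hd p \<in> range q \<and> last p \<in> range q')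
      \<and> pairwise (\<lambda>p p'. set p \<inter> set p' = {}) P"
  proof (rule infinite_pairwise_disjoint_family)
    fix F :: "'a set" assume "finite F"
    then obtain p where "gpath V adj p" "hd p \<in> range q" "last p \<in> range q'" "set p \<inter> F = {}"
      using same_end_avoiding_path[OF assms] by blast
    moreover have "p \<noteq> []" using \<open>gpath V adj p\<close> unfolding gpath_def by simp
    ultimately show "\<exists>p. (gpath V adj p \<and> hd p \<in> range q \<and> last p \<in> range q') \<and> p \<noteq> [] \<and> set p \<inter> F = {}"
      by blast
  qed
  then show ?thesis unfolding ray_equiv_def pairwise_def by blast
qed

lemma ray_equiv_iff_same_end:
  "ray V adj q \<Longrightarrow> ray V adj q' \<Longrightarrow> ray_equiv V adj q q' \<longleftrightarrow> same_end q q'"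
  using ray_equiv_imp_same_end same_end_imp_ray_equiv by blast

lemma two_ends_representatives:
  assumes "card (ends V adj) = 2"
  obtains r1 r2 where "ray V adj r1" "ray V adj r2" "\<not> same_end r1 r2"
    "\<And>q. ray V adj q \<Longrightarrow> same_end r1 q \<or> same_end r2 q"
proof -
  define end_of where "end_of r = {s. ray V adj s \<and> ray_equiv V adj r s}" for r
  have ends: "ends V adj = {end_of r | r. ray V adj r}"
    unfolding ends_def end_of_def by simp
  have end_of: "end_of r = {s. ray V adj s \<and> same_end r s}" if "ray V adj r" for r
    using ray_equiv_iff_same_end[OF that] unfolding end_of_def by blast
  obtain X Y where XY: "ends V adj = {X, Y}" "X \<noteq> Y"
    using assms unfolding card_2_iff by blast
  have "X \<in> ends V adj" "Y \<in> ends V adj" using XY(1) by simp_all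
  then obtain r1 r2 where r: "ray V adj r1" "ray V adj r2" "X = end_of r1" "Y = end_of r2"
    unfolding ends by blast
  have "\<not> same_end r1 r2"
  proof
    assume "same_end r1 r2"
    then have "end_of r1 = end_of r2"
      using same_end_trans same_end_sym unfolding end_of[OF r(1)] end_of[OF r(2)] by blast
    then show False using XY(2) r(3,4) by simp
  qed
  moreover have "same_end r1 q \<or> same_end r2 q" if q: "ray V adj q" for q
  proof -
    have "end_of q \<in> ends V adj" using q unfolding ends by blast
    then have "end_of q = end_of r1 \<or> end_of q = end_of r2" using XY(1) r(3,4) by simp
    moreover have "q \<in> end_of q" using q same_end_refl unfolding end_of[OF q] by blast
    ultimately show ?thesis using r(1,2) end_of by blast
  qed
  ultimately show ?thesis using that r(1,2) by blast
qed

lemma same_end_image: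
  assumes f: "automorphism V adj f" and "same_end q q'"
  shows "same_end (f \<circ> q) (f \<circ> q')"
  unfolding same_end_def
proof (intro allI impI)
  fix T :: "'a set" assume T: "finite T"
  define T' where "T' = inv_into V f ` (T \<inter> V)"
  have T'V: "T' \<subseteq> V" unfolding T'_def using automorphism_vertex[OF automorphism_inv[OF f]] by blast
  have fT': "f ` T' = T \<inter> V" unfolding T'_def using automorphism_inv_right[OF f] by force
  have "finite T'" unfolding T'_def using T by simp
  then obtain b where "eventually_in q (component (V - T') b)" "eventually_in q' (component (V - T') b)"
    using assms(2) unfolding same_end_def by blast
  then have "eventually_in (f \<circ> q) (component (V - (T \<inter> V)) (f b))"
    "eventually_in (f \<circ> q') (component (V - (T \<inter> V)) (f b))"
    using automorphism_eventually_in[OF f T'V, of q b] automorphism_eventually_in[OF f T'V, of q' b]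
    unfolding fT' by auto
  moreover have "V - (T \<inter> V) = V - T" by blast
  ultimately show "\<exists>a. eventually_in (f \<circ> q) (component (V - T) a) \<and>
      eventually_in (f \<circ> q') (component (V - T) a)"
    by metis
qed

lemma same_end_image_reflect:
  assumes f: "automorphism V adj f" and "ray V adj q" "ray V adj q'"
    and "same_end (f \<circ> q) (f \<circ> q')"
  shows "same_end q q'"
proof -
  let ?h = "inv_into V f"
  have "?h \<circ> (f \<circ> q) = q" "?h \<circ> (f \<circ> q') = q'"
    using assms(2,3) automorphism_inv_left[OF f] unfolding ray_def by (auto simp: fun_eq_iff range_subsetD)
  then show ?thesis using same_end_image[OF automorphism_inv[OF f] assms(4)] by simp
qed

lemma component_outside: "x \<notin> X \<Longrightarrow> component X x = {x}"
  unfolding component_def using walk_within_endpoints by fastforce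

lemma component_split:
  "component X v \<subseteq> insert v (\<Union>w\<in>{w. adj_within X v w}. component (X - {v}) w)"
proof
  fix y assume "y \<in> component X v"
  then have "(adj_within X)\<^sup>*\<^sup>* v y" unfolding component_def by simp
  then show "y \<in> insert v (\<Union>w\<in>{w. adj_within X v w}. component (X - {v}) w)"
  proof (induction rule: rtranclp_induct)
    case (step y z)
    show ?case
    proof (cases "z = v \<or> y = v")
      case True
      then show ?thesis using step.hyps(2) component_self by blast
    next
      case False
      then have "adj_within (X - {v}) y z" using step.hyps(2) unfolding adj_within_def by auto
      then show ?thesis using step.IH False component_step by blast
    qed
  qed simp
qed

lemma infinite_component_step:
  assumes "infinite (component X v)"
  shows "\<exists>w. adj_within X v w \<and> infinite (component (X - {v}) w)"
proof (rule ccontr)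
  assume "\<not> ?thesis"
  moreover have "finite {w. adj_within X v w}"
    using finite_neighbours by (rule finite_subset[rotated]) (auto simp: adj_within_def)
  ultimately have "finite (insert v (\<Union>w\<in>{w. adj_within X v w}. component (X - {v}) w))"
    by blast
  then show False using assms component_split finite_subset by metis
qed

text \<open>Koenig's lemma: follow edges into infinite components, deleting each visited vertex.\<close>
lemma infinite_component_ray:
  assumes "infinite (component X x0)"
  shows "\<exists>r. ray V adj r \<and> range r \<subseteq> component X x0"
proof -
  have "\<exists>f. \<forall>n. (snd (f n) \<subseteq> X \<and> infinite (component (snd (f n)) (fst (f n)))
      \<and> (n = 0 \<longrightarrow> f n = (x0, X)))
    \<and> (adj (fst (f n)) (fst (f (Suc n))) \<and> snd (f (Suc n)) = snd (f n) - {fst (f n)})"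
  proof (rule dependent_nat_choice)
    fix vY :: "'a \<times> 'a set" and n :: nat
    assume "snd vY \<subseteq> X \<and> infinite (component (snd vY) (fst vY)) \<and> (n = 0 \<longrightarrow> vY = (x0, X))"
    then obtain w where "adj_within (snd vY) (fst vY) w" "infinite (component (snd vY - {fst vY}) w)"
      using infinite_component_step by blast
    then show "\<exists>wY. (snd wY \<subseteq> X \<and> infinite (component (snd wY) (fst wY)) \<and> (Suc n = 0 \<longrightarrow> wY = (x0, X)))
        \<and> (adj (fst vY) (fst wY) \<and> snd wY = snd vY - {fst vY})"
      using \<open>snd vY \<subseteq> X \<and> _\<close> unfolding adj_within_def by (intro exI[of _ "(w, snd vY - {fst vY})"]) auto
  qed (use assms in auto)
  then obtain f where f: "\<forall>n. (snd (f n) \<subseteq> X \<and> infinite (component (snd (f n)) (fst (f n)))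
      \<and> (n = 0 \<longrightarrow> f n = (x0, X)))
    \<and> (adj (fst (f n)) (fst (f (Suc n))) \<and> snd (f (Suc n)) = snd (f n) - {fst (f n)})"
    by blast
  define r where "r n = fst (f n)" for n
  define Y where "Y n = snd (f n)" for n
  have r0: "r 0 = x0" and adj: "adj (r n) (r (Suc n))" and Y: "Y n \<subseteq> X"
    and Y_Suc: "Y (Suc n) = Y n - {r n}" for n
    using f unfolding r_def Y_def by auto
  have r_in_Y: "r n \<in> Y n" for n
    using f component_outside[of "r n" "Y n"] unfolding r_def Y_def by (metis finite.emptyI finite_insert)
  have Y_antimono: "Y n \<subseteq> Y m" if "m \<le> n" for m n
    using that by (induction n rule: dec_induct) (auto simp: Y_Suc)
  have "r m \<noteq> r n" if "m < n" for m n
    using r_in_Y[of n] Y_antimono[of "Suc m" n] that Y_Suc[of m] by auto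
  then have "inj r" by (metis injI nat_neq_iff)
  moreover have "r n \<in> component X x0" for n
  proof (induction n)
    case (Suc n)
    have "adj_within X (r n) (r (Suc n))" using adj r_in_Y Y unfolding adj_within_def by blast
    then show ?case using Suc component_step by blast
  qed (simp add: r0)
  ultimately show ?thesis using adj adj_vertices unfolding ray_def by blast
qed

lemma component_touches:
  assumes "T \<inter> V \<noteq> {}" "y \<in> V - T"
  shows "\<exists>z\<in>component (V - T) y. \<exists>t\<in>T. adj z t"
proof -
  obtain w where "w \<in> T" "w \<in> V" using assms(1) by blast
  then have "adj\<^sup>*\<^sup>* y w" using reachable assms(2) by blast
  then show ?thesis
    using \<open>w \<in> T\<close> assms(2)
  proof (induction rule: converse_rtranclp_induct)
    case (step y y')
    show ?case
    proof (cases "y' \<in> T")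
      case True then show ?thesis using step.hyps(1) component_self by blast
    next
      case False
      then have "y' \<in> V - T" using step.hyps(1) adj_vertices by blast
      then have "y' \<in> component (V - T) y"
        using step.hyps(1) step.prems(2) component_step[OF component_self] unfolding adj_within_def by blast
      then show ?thesis using step.IH[OF step.prems(1) \<open>y' \<in> V - T\<close>] component_eq by blast
    qed
  qed simp
qed

lemma rayless_closed_set_finite:
  assumes T: "finite T" "T \<inter> V \<noteq> {}" and Z: "Z \<subseteq> V - T"
    and closed: "\<And>z. z \<in> Z \<Longrightarrow> component (V - T) z \<subseteq> Z"
    and rayless: "\<And>r. ray V adj r \<Longrightarrow> \<not> range r \<subseteq> Z"
  shows "finite Z"
proof -
  define N where "N = (\<Union>t\<in>T. {z. adj t z})"
  have "finite N" unfolding N_def using T(1) by (simp add: finite_neighbours)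
  moreover have "finite (component (V - T) z)" if "z \<in> Z" for z
    using infinite_component_ray[of "V - T" z] closed[OF that] rayless by blast
  ultimately have "finite (\<Union>z\<in>N \<inter> Z. component (V - T) z)" by (intro finite_UN_I) auto
  moreover have "Z \<subseteq> (\<Union>z\<in>N \<inter> Z. component (V - T) z)"
  proof
    fix y assume y: "y \<in> Z"
    then obtain z t where z: "z \<in> component (V - T) y" "t \<in> T" "adj z t"
      using component_touches[OF T(2)] Z by blast
    then have "z \<in> N \<inter> Z" using y closed adj_sym unfolding N_def by blast
    then show "y \<in> (\<Union>z\<in>N \<inter> Z. component (V - T) z)" using z(1) component_sym by blast
  qed
  ultimately show ?thesis by (rule finite_subset[rotated])
qed

lemma finite_connected_superset:
  assumes T: "finite T" and v0: "v0 \<in> V"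
  obtains S where "finite S" "S \<subseteq> V" "v0 \<in> S" "T \<inter> V \<subseteq> S" "connected_graph S (adj_within S)"
proof -
  have "\<exists>p. gpath V adj p \<and> hd p = v0 \<and> last p = t \<and> set p \<subseteq> V" if "t \<in> T \<inter> V" for t
    using walk_within_imp_gpath[OF walk_in_V[OF reachable]] v0 that by blast
  then obtain P where P: "\<And>t. t \<in> T \<inter> V \<Longrightarrow> gpath V adj (P t) \<and> hd (P t) = v0 \<and> last (P t) = t \<and> set (P t) \<subseteq> V"
    by metis
  define S where "S = insert v0 (\<Union>t\<in>T \<inter> V. set (P t))"
  have from_v0: "(adj_within S)\<^sup>*\<^sup>* v0 s" if s: "s \<in> S" for s
  proof (cases "s = v0")
    case False
    then obtain t where t: "t \<in> T \<inter> V" "s \<in> set (P t)" using s unfolding S_def by blast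
    then have "(adj_within (set (P t)))\<^sup>*\<^sup>* v0 s" using gpath_walk_within[of "P t"] P by simp
    moreover have "set (P t) \<subseteq> S" using t(1) unfolding S_def by blast
    ultimately show ?thesis using walk_within_mono by blast
  qed simp
  have "connected_graph S (adj_within S)"
    unfolding connected_graph_def
  proof (intro conjI ballI)
    fix u v assume "u \<in> S" "v \<in> S"
    then show "(adj_within S)\<^sup>*\<^sup>* u v" using from_v0 walk_within_sym rtranclp_trans by metis
  qed (simp add: S_def)
  moreover have "T \<inter> V \<subseteq> S"
  proof
    fix t assume "t \<in> T \<inter> V"
    then have "P t \<noteq> []" "last (P t) = t" using P unfolding gpath_def by auto
    then have "t \<in> set (P t)" using last_in_set by metis
    then show "t \<in> S" using \<open>t \<in> T \<inter> V\<close> unfolding S_def by blast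
  qed
  moreover have "finite S" "S \<subseteq> V" "v0 \<in> S" using T v0 P unfolding S_def by auto
  ultimately show ?thesis using that by blast
qed

definition graph_ball :: "'a set \<Rightarrow> nat \<Rightarrow> 'a set" where
  "graph_ball M D = {y. \<exists>m\<in>M. \<exists>n\<le>D. (adj ^^ n) m y}"

lemma finite_graph_ball: "finite M \<Longrightarrow> finite (graph_ball M D)"
proof -
  assume M: "finite M"
  have sphere: "finite {y. (adj ^^ n) x y}" for n x
  proof (induction n)
    case (Suc n)
    have "{y. (adj ^^ Suc n) x y} \<subseteq> (\<Union>z\<in>{y. (adj ^^ n) x y}. {y. adj z y})"
      by (auto elim: relpowp_Suc_E)
    then show ?case using Suc finite_neighbours by (meson finite_UN_I finite_subset)
  qed simp
  have "graph_ball M D = (\<Union>m\<in>M. \<Union>n\<in>{..D}. {y. (adj ^^ n) m y})"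
    unfolding graph_ball_def by auto
  then show ?thesis using M sphere by simp
qed

lemma relpowp_adj_sym: "(adj ^^ n) x y \<Longrightarrow> (adj ^^ n) y x"
proof (induction n arbitrary: y)
  case (Suc n)
  then obtain z where "(adj ^^ n) x z" "adj z y" by (auto elim: relpowp_Suc_E)
  then show ?case using Suc.IH adj_sym relpowp_Suc_I2 by metis
qed simp

lemma automorphism_relpowp:
  "automorphism V adj f \<Longrightarrow> (adj ^^ n) x y \<Longrightarrow> (adj ^^ n) (f x) (f y)"
proof (induction n arbitrary: y)
  case (Suc n)
  then obtain z where "(adj ^^ n) x z" "adj z y" by (auto elim: relpowp_Suc_E)
  then show ?case using Suc automorphism_adj relpowp_Suc_I by metis
qed simp

lemma finite_set_in_graph_ball:
  assumes "finite S" "S \<subseteq> V" "s0 \<in> V"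
  obtains D where "S \<subseteq> graph_ball {s0} D"
proof -
  have "\<exists>n. (adj ^^ n) s0 s" if "s \<in> S" for s
    using assms(2,3) that by (intro rtranclp_imp_relpowp reachable) auto
  then obtain dist where dist: "\<And>s. s \<in> S \<Longrightarrow> (adj ^^ dist s) s0 s" by metis
  obtain D where "\<forall>k\<in>dist ` S. k \<le> D"
    using assms(1) finite_nat_set_iff_bounded_le by blast
  then have "S \<subseteq> graph_ball {s0} D" unfolding graph_ball_def using dist by blast
  then show ?thesis using that by blast
qed

lemma finite_orbit_imp_finite:
  assumes qt: "quasi_transitive V adj" and s0: "s0 \<in> V"
    and finite_orbit: "finite {f s0 | f. automorphism V adj f}"
  shows "finite V"
proof -
  define orb where "orb v = {f v | f. automorphism V adj f}" for v
  have "orbits V {f. automorphism V adj f} = orb ` V" unfolding orbits_def orb_def by auto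
  then have "finite (orb ` V)" using qt unfolding quasi_transitive_def by simp
  then obtain R where R: "R \<subseteq> V" "finite R" "orb ` V = orb ` R"
    using finite_subset_image[of "orb ` V" orb V] by blast
  obtain D where D: "R \<subseteq> graph_ball {s0} D" using finite_set_in_graph_ball[OF R(2,1) s0] .
  have "V \<subseteq> graph_ball (orb s0) D"
  proof
    fix v assume "v \<in> V"
    then have "orb v \<in> orb ` R" using R(3) by (metis imageI)
    then obtain r where r: "r \<in> R" "orb v = orb r" by (elim imageE) simp
    have "v \<in> orb v" unfolding orb_def by (rule CollectI, rule exI[of _ id]) (simp add: automorphism_id)
    then obtain f where f: "automorphism V adj f" "v = f r" using r(2) unfolding orb_def by blast
    obtain n where n: "n \<le> D" "(adj ^^ n) s0 r" using D r(1) unfolding graph_ball_def by auto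
    have "(adj ^^ n) (f s0) v" using automorphism_relpowp[OF f(1) n(2)] f(2) by simp
    moreover have "f s0 \<in> orb s0" unfolding orb_def using f(1) by blast
    ultimately show "v \<in> graph_ball (orb s0) D" using n(1) unfolding graph_ball_def by blast
  qed
  moreover have "finite (graph_ball (orb s0) D)"
    using finite_orbit unfolding orb_def by (rule finite_graph_ball)
  ultimately show ?thesis by (rule finite_subset)
qed

text \<open>Otherwise every automorphism maps some vertex of S into M, so the orbit of s0 lies within
  distance D of M, where D bounds the distances from s0 to S; a finite orbit makes V finite.\<close>
lemma automorphism_avoiding_finite_set:
  assumes qt: "quasi_transitive V adj" and "infinite V" and S: "finite S" "S \<subseteq> V" "s0 \<in> S"
    and M: "finite M"
  shows "\<exists>f. automorphism V adj f \<and> f ` S \<inter> M = {}"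
proof (rule ccontr)
  assume hits: "\<not> ?thesis"
  have s0: "s0 \<in> V" using S by blast
  obtain D where D: "S \<subseteq> graph_ball {s0} D" using finite_set_in_graph_ball[OF S(1,2) s0] .
  have "{f s0 | f. automorphism V adj f} \<subseteq> graph_ball M D"
  proof
    fix y assume "y \<in> {f s0 | f. automorphism V adj f}"
    then obtain f where f: "automorphism V adj f" "y = f s0" by blast
    then obtain s where s: "s \<in> S" "f s \<in> M" using hits by blast
    then obtain n where n: "n \<le> D" "(adj ^^ n) s0 s" using D unfolding graph_ball_def by auto
    then have "(adj ^^ n) (f s) y" using automorphism_relpowp[OF f(1)] relpowp_adj_sym f(2) by blast
    then show "y \<in> graph_ball M D" using n(1) s(2) unfolding graph_ball_def by blast
  qed
  then have "finite {f s0 | f. automorphism V adj f}"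
    using finite_graph_ball[OF M] by (rule finite_subset)
  then have "finite V" by (rule finite_orbit_imp_finite[OF qt s0])
  then show False using \<open>infinite V\<close> by simp
qed

end

locale translation = connected_lf_graph +
  fixes g :: "'a \<Rightarrow> 'a" and A S :: "'a set"
  assumes g_automorphism: "automorphism V adj g"
    and A_vertices: "A \<subseteq> V" and S_vertices: "S \<subseteq> V" and S_nonempty: "S \<noteq> {}"
    and A_disjoint_S: "A \<inter> S = {}" and A_boundary: "\<And>u v. u \<in> A \<Longrightarrow> adj u v \<Longrightarrow> v \<in> A \<union> S"
    and g_A: "g ` A \<subseteq> A" and g_S: "g ` S \<subseteq> A" and finite_A_diff: "finite (A - g ` A)"

locale two_ended = connected_lf_graph +
  fixes r1 r2 :: "nat \<Rightarrow> 'a"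
  assumes ray1: "ray V adj r1" and ray2: "ray V adj r2" and distinct_ends: "\<not> same_end r1 r2"
    and every_ray_end: "\<And>q. ray V adj q \<Longrightarrow> same_end r1 q \<or> same_end r2 q"
begin

lemma two_ended_swap: "two_ended V adj r2 r1"
  using is_graph is_connected is_locally_finite ray1 ray2 distinct_ends every_ray_end same_end_sym
  by unfold_locales blast+

lemma infinite_vertices: "infinite V"
  using ray1 unfolding ray_def by (meson infinite_iff_countable_subset)

lemma automorphism_fixes_ends:
  assumes g: "automorphism V adj g" and fix1: "same_end (g \<circ> r1) r1"
  shows "same_end (g \<circ> r2) r2"
proof -
  have "same_end r1 (g \<circ> r2) \<or> same_end r2 (g \<circ> r2)"
    using every_ray_end automorphism_ray[OF g ray2] by blast
  moreover have "\<not> same_end r1 (g \<circ> r2)"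
  proof
    assume "same_end r1 (g \<circ> r2)"
    then have "same_end (g \<circ> r1) (g \<circ> r2)" using fix1 same_end_trans by blast
    then show False using same_end_image_reflect[OF g ray1 ray2] distinct_ends by blast
  qed
  ultimately show ?thesis using same_end_sym by blast
qed

lemma automorphism_swaps_ends:
  assumes g: "automorphism V adj g" and "\<not> same_end (g \<circ> r1) r1"
  shows "same_end (g \<circ> r1) r2" "same_end (g \<circ> r2) r1"
proof -
  show swap1: "same_end (g \<circ> r1) r2"
    using every_ray_end[OF automorphism_ray[OF g ray1]] assms(2) same_end_sym by blast
  have "same_end r1 (g \<circ> r2) \<or> same_end r2 (g \<circ> r2)"
    using every_ray_end automorphism_ray[OF g ray2] by blast
  moreover have "\<not> same_end r2 (g \<circ> r2)"
  proof
    assume "same_end r2 (g \<circ> r2)"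
    then have "same_end (g \<circ> r1) (g \<circ> r2)" using swap1 same_end_trans by blast
    then show False using same_end_image_reflect[OF g ray1 ray2] distinct_ends by blast
  qed
  ultimately show "same_end (g \<circ> r2) r1" using same_end_sym by blast
qed

text \<open>If the automorphism f1 moving S off K swaps the ends and so does f2, which moves S off K
  and off the preimage of K under f1, then f1 \<circ> f2 fixes them.\<close>
lemma end_fixing_automorphism_avoiding:
  assumes qt: "quasi_transitive V adj" and S: "finite S" "S \<subseteq> V" "S \<noteq> {}" and K: "finite K"
  shows "\<exists>g. automorphism V adj g \<and> g ` S \<inter> K = {} \<and> same_end (g \<circ> r1) r1 \<and> same_end (g \<circ> r2) r2"
proof -
  obtain s0 where s0: "s0 \<in> S" using S(3) by blast
  obtain f1 where f1: "automorphism V adj f1" "f1 ` S \<inter> K = {}"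
    using automorphism_avoiding_finite_set[OF qt infinite_vertices S(1,2) s0 K] by blast
  have "finite (K \<union> (f1 -` K \<inter> V))"
    using K finite_vimage_IntI automorphism_inj[OF f1(1)] by blast
  then obtain f2 where f2: "automorphism V adj f2" "f2 ` S \<inter> (K \<union> (f1 -` K \<inter> V)) = {}"
    using automorphism_avoiding_finite_set[OF qt infinite_vertices S(1,2) s0] by blast
  consider "same_end (f1 \<circ> r1) r1" | "same_end (f2 \<circ> r1) r1"
    | "\<not> same_end (f1 \<circ> r1) r1" "\<not> same_end (f2 \<circ> r1) r1" by blast
  then show ?thesis
  proof cases
    case 1 then show ?thesis using f1 automorphism_fixes_ends by blast
  next
    case 2 then show ?thesis using f2 automorphism_fixes_ends by blast
  next
    case 3
    have "same_end (f1 \<circ> (f2 \<circ> r1)) (f1 \<circ> r2)"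
      using same_end_image[OF f1(1) automorphism_swaps_ends(1)[OF f2(1) 3(2)]] .
    then have fix1: "same_end ((f1 \<circ> f2) \<circ> r1) r1"
      using automorphism_swaps_ends(2)[OF f1(1) 3(1)] same_end_trans by (simp add: o_assoc)
    have "(f1 \<circ> f2) ` S \<inter> K = {}"
      using f2(2) automorphism_vertex[OF f2(1)] S(2) by auto
    then show ?thesis
      using automorphism_comp[OF f1(1) f2(1)] fix1 automorphism_fixes_ends by blast
  qed
qed

end

locale end_separator = two_ended +
  fixes S :: "'a set" and x1 x2 :: 'a
  assumes finite_S: "finite S" and S_vertices: "S \<subseteq> V"
    and S_connected: "connected_graph S (adj_within S)"
    and x1: "x1 \<in> V - S" and x2: "x2 \<in> V - S"
    and tail1: "eventually_in r1 (component (V - S) x1)"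
    and tail2: "eventually_in r2 (component (V - S) x2)"
    and separates: "component (V - S) x1 \<noteq> component (V - S) x2"
begin

abbreviation "side1 \<equiv> component (V - S) x1"
abbreviation "side2 \<equiv> component (V - S) x2"

lemma end_separator_swap: "end_separator V adj r2 r1 S x2 x1"
  using two_ended_swap finite_S S_vertices S_connected x1 x2 tail1 tail2 separates
  unfolding end_separator_def end_separator_axioms_def by auto

lemma sides_disjoint: "side1 \<inter> side2 = {}"
  using components_disjoint[OF separates] .

lemma sides_outside_S: "side1 \<subseteq> V - S" "side2 \<subseteq> V - S"
  using component_subset x1 x2 by blast+

lemma S_nonempty: "S \<noteq> {}"
  using S_connected unfolding connected_graph_def by blast

lemma finite_outside_sides: "finite (V - side1 - side2)"
proof -
  define Z where "Z = V - S - side1 - side2"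
  have "finite Z"
  proof (rule rayless_closed_set_finite[OF finite_S])
    show "S \<inter> V \<noteq> {}" using S_nonempty S_vertices by blast
    show "Z \<subseteq> V - S" unfolding Z_def by blast
  next
    fix z assume z: "z \<in> Z"
    show "component (V - S) z \<subseteq> Z"
    proof
      fix y assume y: "y \<in> component (V - S) z"
      then have "component (V - S) y = component (V - S) z" by (rule component_eq)
      moreover have "y \<in> V - S" using y z component_subset unfolding Z_def by blast
      ultimately show "y \<in> Z" using z component_eq component_self unfolding Z_def by (metis Diff_iff)
    qed
  next
    fix q assume q: "ray V adj q"
    show "\<not> range q \<subseteq> Z"
    proof
      assume qZ: "range q \<subseteq> Z"
      then have "range q \<subseteq> component (V - S) (q 0)" using ray_range_component q unfolding Z_def by blast
      then have "eventually_in q (component (V - S) (q 0))" by (intro always_eventually) auto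
      then have "q 0 \<in> side1 \<or> q 0 \<in> side2"
        using every_ray_end[OF q] same_end_components[OF _ finite_S] tail1 tail2 by blast
      then show False using qZ unfolding Z_def by blast
    qed
  qed
  moreover have "V - side1 - side2 \<subseteq> Z \<union> S" unfolding Z_def by blast
  ultimately show ?thesis using finite_S by (meson finite_Un finite_subset)
qed

lemma walk_outside_side1:
  assumes s0: "s0 \<in> S" and y: "y \<in> V - side1"
  shows "(adj_within (V - side1))\<^sup>*\<^sup>* s0 y"
proof -
  have S_walk: "(adj_within (V - side1))\<^sup>*\<^sup>* s0 t" if "t \<in> S" for t
    using S_connected s0 that walk_within_mono[of S "V - side1"] sides_outside_S S_vertices
    unfolding connected_graph_def by blast
  show ?thesis
  proof (cases "y \<in> S")
    case False
    then have yVS: "y \<in> V - S" using y by blast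
    obtain z t where zt: "z \<in> component (V - S) y" "t \<in> S" "adj z t"
      using component_touches[OF _ yVS] S_nonempty S_vertices by blast
    have "component (V - S) y \<inter> side1 = {}"
      using y components_disjoint component_self by blast
    then have comp_y: "component (V - S) y \<subseteq> V - side1"
      using component_subset[OF yVS] by blast
    then have "(adj_within (V - side1))\<^sup>*\<^sup>* y z"
      using walk_within_component[OF zt(1)] walk_within_mono by blast
    moreover have "adj_within (V - side1) z t"
      using zt comp_y sides_outside_S S_vertices unfolding adj_within_def by blast
    ultimately have "(adj_within (V - side1))\<^sup>*\<^sup>* t y"
      using walk_within_sym by (meson rtranclp.rtrancl_into_rtrancl)
    then show ?thesis by (rule rtranclp_trans[OF S_walk[OF zt(2)]])
  qed (use S_walk in blast)
qed

lemma translate_side1_subset: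
  assumes g: "automorphism V adj g" and fix2: "same_end (g \<circ> r2) r2" and gS: "g ` S \<subseteq> side1"
  shows "g ` side1 \<subseteq> side1"
proof -
  obtain s0 where s0: "s0 \<in> S" using S_nonempty by blast
  define D where "D = component (V - g ` S) s0"
  have outside_D: "V - side1 \<subseteq> D"
  proof
    fix y assume "y \<in> V - side1"
    then have "(adj_within (V - side1))\<^sup>*\<^sup>* s0 y" by (rule walk_outside_side1[OF s0])
    then have "(adj_within (V - g ` S))\<^sup>*\<^sup>* s0 y"
      using gS walk_within_mono[of "V - side1" "V - g ` S"] by blast
    then show "y \<in> D" unfolding D_def component_def by simp
  qed
  have "side2 \<subseteq> D" using outside_D sides_disjoint sides_outside_S by blast
  then have "eventually_in r2 D" using tail2 by (auto elim: eventually_mono)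
  moreover have "eventually_in (g \<circ> r2) (component (V - g ` S) (g x2))"
    using automorphism_eventually_in[OF g S_vertices tail2] .
  moreover have "finite (g ` S)" using finite_S by simp
  ultimately have "g x2 \<in> D"
    unfolding D_def using same_end_components[OF same_end_sym[OF fix2]] by blast
  then have D_eq: "component (V - g ` S) (g x2) = D" unfolding D_def by (rule component_eq)
  show ?thesis
  proof
    fix w assume "w \<in> g ` side1"
    then obtain y where y: "y \<in> side1" "w = g y" by blast
    have yV: "y \<in> V" using y(1) sides_outside_S by blast
    show "w \<in> side1"
    proof (rule ccontr)
      assume "w \<notin> side1"
      then have "g y \<in> component (V - g ` S) (g x2)"
        using D_eq outside_D y(2) automorphism_vertex[OF g yV] by blast
      then have "y \<in> side2" using automorphism_component_reflect[OF g S_vertices] x2 yV by blast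
      then show False using y(1) sides_disjoint by blast
    qed
  qed
qed

lemma no_ray_in_side1_translate_side2:
  assumes g: "automorphism V adj g" and fix1: "same_end (g \<circ> r1) r1"
    and q: "ray V adj q" and q_range: "range q \<subseteq> side1 \<inter> g ` side2"
  shows False
proof -
  have "finite (g ` S)" using finite_S by simp
  have in1: "eventually_in q side1" using q_range by (intro always_eventually) auto
  have "g ` side2 \<subseteq> component (V - g ` S) (g x2)" using automorphism_component[OF g S_vertices] .
  then have in2: "eventually_in q (component (V - g ` S) (g x2))"
    using q_range by (intro always_eventually) blast
  consider "same_end r1 q" | "same_end r2 q" using every_ray_end[OF q] by blast
  then show False
  proof cases
    case 1
    then have "same_end (g \<circ> r1) q" using fix1 same_end_trans by blast
    then have "g x2 \<in> component (V - g ` S) (g x1)"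
      using same_end_components \<open>finite (g ` S)\<close> automorphism_eventually_in[OF g S_vertices tail1] in2
      by blast
    then have "x2 \<in> side1" using automorphism_component_reflect[OF g S_vertices] x1 x2 by blast
    then show False using sides_disjoint component_self by blast
  next
    case 2
    then have "x1 \<in> side2" using same_end_components[OF _ finite_S tail2 in1] by blast
    then show False using sides_disjoint component_self by blast
  qed
qed

lemma finite_side1_translate_side2:
  assumes g: "automorphism V adj g" and fix1: "same_end (g \<circ> r1) r1"
  shows "finite (side1 \<inter> g ` side2)"
proof (rule rayless_closed_set_finite[of "S \<union> g ` S"])
  show "finite (S \<union> g ` S)" using finite_S by simp
  show "(S \<union> g ` S) \<inter> V \<noteq> {}" using S_nonempty S_vertices by blast
  show "side1 \<inter> g ` side2 \<subseteq> V - (S \<union> g ` S)"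
  proof
    fix z assume z: "z \<in> side1 \<inter> g ` side2"
    then obtain w where w: "w \<in> side2" "z = g w" by blast
    have "z \<notin> g ` S"
      using inj_on_image_mem_iff[OF automorphism_inj[OF g]] w sides_outside_S S_vertices by blast
    then show "z \<in> V - (S \<union> g ` S)" using z sides_outside_S by blast
  qed
next
  fix z assume z: "z \<in> side1 \<inter> g ` side2"
  then obtain w where w: "w \<in> side2" "z = g w" by blast
  show "component (V - (S \<union> g ` S)) z \<subseteq> side1 \<inter> g ` side2"
  proof
    fix y assume y: "y \<in> component (V - (S \<union> g ` S)) z"
    then have "y \<in> component (V - S) z" using component_mono[of "V - (S \<union> g ` S)" "V - S"] by blast
    then have y1: "y \<in> side1" using component_eq[of z "V - S" x1] z by blast
    then have yV: "y \<in> V" using sides_outside_S by blast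
    define y' where "y' = inv_into V g y"
    have y'V: "y' \<in> V" and gy': "g y' = y"
      unfolding y'_def using automorphism_vertex[OF automorphism_inv[OF g] yV]
        automorphism_inv_right[OF g yV] by auto
    have "g y' \<in> component (V - g ` S) (g w)"
      using y w(2) gy' component_mono[of "V - (S \<union> g ` S)" "V - g ` S"] by blast
    then have "y' \<in> component (V - S) w"
      using automorphism_component_reflect[OF g S_vertices] w(1) sides_outside_S y'V by blast
    then have "y' \<in> side2" using component_eq[of w "V - S" x2] w(1) by blast
    then show "y \<in> side1 \<inter> g ` side2" using y1 gy' by blast
  qed
next
  fix q assume "ray V adj q"
  then show "\<not> range q \<subseteq> side1 \<inter> g ` side2"
    using no_ray_in_side1_translate_side2[OF g fix1] by blast
qed

lemma finite_side1_diff_translate: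
  assumes g: "automorphism V adj g" and fix1: "same_end (g \<circ> r1) r1"
  shows "finite (side1 - g ` side1)"
proof -
  have "side1 - g ` side1 \<subseteq> g ` (V - side1 - side2) \<union> (side1 \<inter> g ` side2)"
  proof
    fix y assume y: "y \<in> side1 - g ` side1"
    then have yV: "y \<in> V" using sides_outside_S by blast
    define y' where "y' = inv_into V g y"
    have "y' \<in> V" and gy': "g y' = y"
      unfolding y'_def using automorphism_vertex[OF automorphism_inv[OF g] yV]
        automorphism_inv_right[OF g yV] by auto
    moreover have "y' \<notin> side1" using y gy' by blast
    ultimately show "y \<in> g ` (V - side1 - side2) \<union> (side1 \<inter> g ` side2)" using y by blast
  qed
  moreover have "finite (g ` (V - side1 - side2) \<union> (side1 \<inter> g ` side2))"
    using finite_outside_sides finite_side1_translate_side2[OF g fix1] by simp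
  ultimately show ?thesis by (rule finite_subset)
qed

lemma translation_side1:
  assumes g: "automorphism V adj g" and fix1: "same_end (g \<circ> r1) r1"
    and fix2: "same_end (g \<circ> r2) r2" and gS: "g ` S \<subseteq> side1"
  shows "translation V adj g side1 S"
proof unfold_locales
  show "side1 \<subseteq> V" "side1 \<inter> S = {}" using sides_outside_S by blast+
  show "v \<in> side1 \<union> S" if "u \<in> side1" "adj u v" for u v
    using component_boundary that x1 by blast
  show "g ` side1 \<subseteq> side1" using translate_side1_subset[OF g fix2 gS] .
  show "finite (side1 - g ` side1)" using finite_side1_diff_translate[OF g fix1] .
qed (use g gS S_vertices S_nonempty in auto)

lemma automorphism_image_in_one_side:
  assumes g: "automorphism V adj g" and avoids: "g ` S \<inter> (V - side1 - side2) = {}"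
  shows "g ` S \<subseteq> side1 \<or> g ` S \<subseteq> side2"
proof -
  obtain s0 where s0: "s0 \<in> S" using S_nonempty by blast
  have gS_sides: "g ` S \<subseteq> side1 \<union> side2"
    using avoids automorphism_vertex[OF g] S_vertices by blast
  then have gS: "g ` S \<subseteq> V - S" using sides_outside_S by blast
  have "g s \<in> component (V - S) (g s0)" if "s \<in> S" for s
  proof -
    have "(adj_within S)\<^sup>*\<^sup>* s0 s" using S_connected s0 that unfolding connected_graph_def by blast
    then have "(adj_within (g ` S))\<^sup>*\<^sup>* (g s0) (g s)" by (rule automorphism_walk_within[OF g])
    then show ?thesis using gS walk_within_mono unfolding component_def by blast
  qed
  moreover have "g s0 \<in> side1 \<or> g s0 \<in> side2" using gS_sides s0 by blast
  ultimately show ?thesis using component_eq by blast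
qed

lemma translation_exists:
  assumes qt: "quasi_transitive V adj"
  shows "\<exists>g A. translation V adj g A S"
proof -
  obtain g where g: "automorphism V adj g" "g ` S \<inter> (V - side1 - side2) = {}"
    and fix1: "same_end (g \<circ> r1) r1" and fix2: "same_end (g \<circ> r2) r2"
    using end_fixing_automorphism_avoiding[OF qt finite_S S_vertices S_nonempty finite_outside_sides]
    by blast
  consider "g ` S \<subseteq> side1" | "g ` S \<subseteq> side2"
    using automorphism_image_in_one_side[OF g] by blast
  then show ?thesis
  proof cases
    case 1
    then show ?thesis using translation_side1[OF g(1) fix1 fix2] by blast
  next
    case 2
    then show ?thesis
      using end_separator.translation_side1[OF end_separator_swap g(1) fix2 fix1] by blast
  qed
qed

end

context two_ended
begin

lemma exists_end_separator: "\<exists>S x1 x2. end_separator V adj r1 r2 S x1 x2"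
proof -
  obtain T0 where T0: "finite T0"
    and apart: "\<not> (\<exists>a. eventually_in r1 (component (V - T0) a) \<and> eventually_in r2 (component (V - T0) a))"
    using distinct_ends unfolding same_end_def by blast
  have "r1 0 \<in> V" using ray1 unfolding ray_def by auto
  then obtain S where S: "finite S" "S \<subseteq> V" "T0 \<inter> V \<subseteq> S" "connected_graph S (adj_within S)"
    using finite_connected_superset[OF T0] by metis
  obtain x1 where x1: "x1 \<in> V - S" "eventually_in r1 (component (V - S) x1)"
    using ray_tail_component[OF ray1 S(1)] by metis
  obtain x2 where x2: "x2 \<in> V - S" "eventually_in r2 (component (V - S) x2)"
    using ray_tail_component[OF ray2 S(1)] by metis
  have "component (V - S) x1 \<noteq> component (V - S) x2"
  proof
    assume same: "component (V - S) x1 = component (V - S) x2"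
    have "component (V - S) x1 \<subseteq> component (V - T0) x1"
      using S(3) by (intro component_mono) blast
    then have "eventually_in r1 (component (V - T0) x1) \<and> eventually_in r2 (component (V - T0) x1)"
      using x1(2) x2(2) same by (auto elim: eventually_mono)
    then show False using apart by blast
  qed
  then have "end_separator V adj r1 r2 S x1 x2"
    using S x1 x2 by unfold_locales auto
  then show ?thesis by blast
qed

end

context connected_lf_graph
begin

lemma two_ended_translation:
  assumes qt: "quasi_transitive V adj" and "card (ends V adj) = 2"
  shows "\<exists>g A S. translation V adj g A S"
proof -
  obtain r1 r2 where "ray V adj r1" "ray V adj r2" "\<not> same_end r1 r2"
    "\<And>q. ray V adj q \<Longrightarrow> same_end r1 q \<or> same_end r2 q"
    using two_ends_representatives[OF assms(2)] by blast
  then interpret two_ended V adj r1 r2 by unfold_locales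
  obtain S x1 x2 where "end_separator V adj r1 r2 S x1 x2" using exists_end_separator by blast
  then show ?thesis using end_separator.translation_exists[OF _ qt] by blast
qed

end

context translation
begin

definition shift :: "int \<Rightarrow> 'a \<Rightarrow> 'a" where
  "shift n = (if n \<ge> 0 then g ^^ nat n else inv_into V g ^^ nat (- n))"

lemma shift_automorphism: "automorphism V adj (shift n)"
  unfolding shift_def using automorphism_funpow g_automorphism automorphism_inv by simp

lemma shift_vertex: "x \<in> V \<Longrightarrow> shift n x \<in> V"
  using automorphism_vertex[OF shift_automorphism] .

lemma shift_0 [simp]: "shift 0 x = x"
  unfolding shift_def by simp

lemma shift_1: "shift 1 = g"
  unfolding shift_def by simp

lemma shift_succ: "x \<in> V \<Longrightarrow> shift (n + 1) x = g (shift n x)"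
proof (cases "n \<ge> 0")
  case True
  then have "nat (n + 1) = Suc (nat n)" by simp
  then show ?thesis unfolding shift_def using True by simp
next
  case False
  assume x: "x \<in> V"
  then have "nat (- n) = Suc (nat (- (n + 1)))" using False by simp
  then have "shift n x = inv_into V g (shift (n + 1) x)"
    unfolding shift_def using False by (cases "n = -1") simp_all
  then show ?thesis using automorphism_inv_right[OF g_automorphism] shift_vertex[OF x] by simp
qed

lemma shift_pred: "x \<in> V \<Longrightarrow> shift (n - 1) x = inv_into V g (shift n x)"
  using shift_succ[of x "n - 1"] automorphism_inv_left[OF g_automorphism] shift_vertex by simp

lemma shift_add: "x \<in> V \<Longrightarrow> shift (m + n) x = shift m (shift n x)"
proof (induction m rule: int_induct[where k = 0])
  case (step1 i)
  then show ?case using shift_succ[of _ "i + n"] shift_succ[of "shift n x" i] shift_vertex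
    by (simp add: algebra_simps)
next
  case (step2 i)
  then show ?case using shift_pred[of _ "i + n"] shift_pred[of "shift n x" i] shift_vertex
    by (simp add: algebra_simps)
qed simp

lemma shift_image_add: "X \<subseteq> V \<Longrightarrow> shift (m + n) ` X = shift m ` shift n ` X"
  unfolding image_image using shift_add by (intro image_cong) auto

definition layer :: "int \<Rightarrow> 'a set" where
  "layer n = shift n ` A"

lemma layer_vertices: "layer n \<subseteq> V"
  unfolding layer_def using shift_vertex A_vertices by blast

lemma shift_layer: "shift k ` layer j = layer (k + j)"
  unfolding layer_def using shift_image_add[OF A_vertices] by simp

lemma layer_antimono: "n \<le> m \<Longrightarrow> layer m \<subseteq> layer n"
proof (induction m rule: int_ge_induct)
  case (step i)
  have "layer (i + 1) = shift i ` g ` A"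
    unfolding layer_def using shift_image_add[OF A_vertices, of i 1] shift_1 by simp
  then have "layer (i + 1) \<subseteq> layer i" unfolding layer_def using g_A by blast
  then show ?case using step.IH by blast
qed simp

lemma layer_adj:
  assumes u: "u \<in> layer n" and "adj u v"
  shows "v \<in> layer (n - 1)"
proof -
  obtain a where a: "a \<in> A" "u = shift n a" using u unfolding layer_def by blast
  have "v \<in> V" using adj_vertices \<open>adj u v\<close> by blast
  define v' where "v' = shift (- n) v"
  have "v = shift n v'" unfolding v'_def using shift_add[OF \<open>v \<in> V\<close>, of n "- n"] by simp
  moreover have "shift (- n) u = a" using a shift_add[of a "- n" n] A_vertices by auto
  then have "adj a v'"
    unfolding v'_def using automorphism_adj[OF shift_automorphism[of "- n"] \<open>adj u v\<close>] by simp
  then have "v' \<in> A \<union> S" using A_boundary a(1) by blast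
  ultimately have "v \<in> layer n \<union> shift n ` S" unfolding layer_def by blast
  moreover have "shift n ` S \<subseteq> layer (n - 1)"
    using shift_image_add[OF S_vertices, of "n - 1" 1] g_S shift_1 unfolding layer_def by auto
  ultimately show ?thesis using layer_antimono[of "n - 1" n] by auto
qed

text \<open>Walk to the vertex from g s0 \<in> layer 0 and from s0 \<notin> layer 0 (s0 \<in> S); by layer_adj
  each step loses at most one layer.\<close>
lemma vertex_in_some_layer:
  assumes v: "v \<in> V"
  shows "\<exists>n. v \<in> layer n"
proof -
  obtain s0 where s0: "s0 \<in> S" using S_nonempty by blast
  then have "adj\<^sup>*\<^sup>* (g s0) v"
    using reachable automorphism_vertex[OF g_automorphism] S_vertices v by blast
  then show ?thesis
  proof (induction rule: rtranclp_induct)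
    case base
    have "g s0 \<in> layer 0" using g_S s0 unfolding layer_def by auto
    then show ?case by blast
  next
    case (step y z)
    then show ?case using layer_adj by blast
  qed
qed

lemma vertex_outside_some_layer:
  assumes v: "v \<in> V"
  shows "\<exists>n. v \<notin> layer n"
proof -
  obtain s0 where s0: "s0 \<in> S" using S_nonempty by blast
  then have "adj\<^sup>*\<^sup>* s0 v" using reachable S_vertices v by blast
  then show ?thesis
  proof (induction rule: rtranclp_induct)
    case base
    have "s0 \<notin> layer 0" using A_disjoint_S s0 unfolding layer_def by auto
    then show ?case by blast
  next
    case (step y z)
    then obtain n where "y \<notin> layer n" by blast
    then have "z \<notin> layer (n + 1)" using layer_adj[of z "n + 1" y] adj_sym[OF step.hyps(2)] by auto
    then show ?case by blast
  qed
qed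

lemma level_exists: "v \<in> V \<Longrightarrow> \<exists>n. v \<in> layer n \<and> v \<notin> layer (n + 1)"
proof -
  assume v: "v \<in> V"
  obtain m where m: "v \<notin> layer m" using vertex_outside_some_layer[OF v] by blast
  obtain n0 where n0: "v \<in> layer n0" using vertex_in_some_layer[OF v] by blast
  have "n0 \<le> m" using layer_antimono[of m n0] m n0 by force
  then show ?thesis
    using n0 m
  proof (induction m rule: int_ge_induct)
    case (step i)
    then show ?case by (cases "v \<in> layer i") auto
  qed simp
qed

lemma level_unique:
  assumes "v \<in> layer j" "v \<notin> layer (j + 1)" "v \<in> layer k" "v \<notin> layer (k + 1)"
  shows "j = k"
  using assms layer_antimono[of "j + 1" k] layer_antimono[of "k + 1" j] by force

definition level :: "'a \<Rightarrow> int" where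
  "level v = (THE n. v \<in> layer n \<and> v \<notin> layer (n + 1))"

lemma level_eq_iff:
  assumes "v \<in> V"
  shows "level v = n \<longleftrightarrow> v \<in> layer n \<and> v \<notin> layer (n + 1)"
proof -
  obtain k where k: "v \<in> layer k \<and> v \<notin> layer (k + 1)" using level_exists[OF assms] by blast
  then have "level v = k" unfolding level_def using level_unique by blast
  then show ?thesis using k level_unique by blast
qed

lemma level_ge: "v \<in> V \<Longrightarrow> v \<in> layer j \<Longrightarrow> j \<le> level v"
  using level_eq_iff layer_antimono[of "level v + 1" j] by force

lemma level_shift:
  assumes x: "x \<in> V"
  shows "level (shift k x) = level x + k"
proof -
  have "x \<in> layer (level x)" "x \<notin> layer (level x + 1)" using level_eq_iff[OF x] by blast+
  then have "shift k x \<in> layer (k + level x)" "shift k x \<notin> layer (k + (level x + 1))"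
    using shift_layer inj_on_image_mem_iff[OF automorphism_inj[OF shift_automorphism] x layer_vertices]
    by blast+
  then show ?thesis using level_eq_iff shift_vertex[OF x] by (simp add: algebra_simps)
qed

lemma finite_level_band: "finite {v\<in>V. a \<le> level v \<and> level v \<le> b}"
proof -
  have "{v\<in>V. a \<le> level v \<and> level v \<le> b} \<subseteq> (\<Union>n\<in>{a..b}. shift n ` (A - g ` A))"
  proof
    fix v assume v: "v \<in> {v\<in>V. a \<le> level v \<and> level v \<le> b}"
    then have lv: "v \<in> layer (level v)" "v \<notin> layer (level v + 1)" using level_eq_iff by blast+
    then obtain y where y: "y \<in> A" "v = shift (level v) y" unfolding layer_def by blast
    have "layer (level v + 1) = shift (level v) ` g ` A"
      unfolding layer_def using shift_image_add[OF A_vertices] shift_1 by simp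
    then have "y \<notin> g ` A" using lv(2) y by blast
    then show "v \<in> (\<Union>n\<in>{a..b}. shift n ` (A - g ` A))" using v y by auto
  qed
  moreover have "finite (\<Union>n\<in>{a..b}. shift n ` (A - g ` A))" using finite_A_diff by simp
  ultimately show ?thesis by (rule finite_subset)
qed

lemma level_adj: "adj u v \<Longrightarrow> level v \<le> level u + 1"
proof -
  assume uv: "adj u v"
  then have "u \<in> V" "v \<in> V" using adj_vertices by auto
  then have "v \<in> layer (level v)" using level_eq_iff by blast
  then have "u \<in> layer (level v - 1)" using layer_adj adj_sym[OF uv] by blast
  then show ?thesis using level_ge \<open>u \<in> V\<close> by fastforce
qed

end

lemma chromatic_index_attained:
  assumes "\<exists>k c. proper_edge_coloring V adj c \<and> c ` edges V adj \<subseteq> {..<k}"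
  shows "\<exists>c. proper_edge_coloring V adj c \<and> c ` edges V adj \<subseteq> {..<chromatic_index V adj}"
  using LeastI_ex[OF assms] unfolding chromatic_index_def .

locale translation_levels = connected_lf_graph +
  fixes shift :: "int \<Rightarrow> 'a \<Rightarrow> 'a" and level :: "'a \<Rightarrow> int"
  assumes shift_automorphism: "automorphism V adj (shift n)"
    and shift_add: "x \<in> V \<Longrightarrow> shift (m + n) x = shift m (shift n x)"
    and shift_0: "x \<in> V \<Longrightarrow> shift 0 x = x"
    and level_shift: "x \<in> V \<Longrightarrow> level (shift k x) = level x + k"
    and finite_level_band: "finite {v\<in>V. a \<le> level v \<and> level v \<le> b}"
    and level_adj: "adj u v \<Longrightarrow> level v \<le> level u + 1"
begin

lemma edge_vertices: "e \<in> edges V adj \<Longrightarrow> e \<subseteq> V"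
  unfolding edges_def by blast

lemma shift_vertex: "x \<in> V \<Longrightarrow> shift n x \<in> V"
  using automorphism_vertex[OF shift_automorphism] .

lemma shift_edge: "e \<in> edges V adj \<Longrightarrow> shift k ` e \<in> edges V adj"
  using automorphism_edge[OF shift_automorphism] .

lemma shift_image_add: "e \<subseteq> V \<Longrightarrow> shift m ` shift n ` e = shift (m + n) ` e"
  unfolding image_image using shift_add by (intro image_cong) auto

lemma shift_image_0: "e \<subseteq> V \<Longrightarrow> shift 0 ` e = e"
  using shift_0 by (simp add: subset_eq)

lemma shift_image_inj: "e \<subseteq> V \<Longrightarrow> e' \<subseteq> V \<Longrightarrow> shift k ` e = shift k ` e' \<Longrightarrow> e = e'"
  using inj_on_image_eq_iff[OF automorphism_inj[OF shift_automorphism]] by blast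

lemma shift_image_cancel: "e \<subseteq> V \<Longrightarrow> shift k ` shift (- k) ` e = e"
  using shift_image_add shift_image_0 by simp

definition min_level :: "'a set \<Rightarrow> int" where
  "min_level e = Min (level ` e)"

lemma edge_levels:
  assumes "e \<in> edges V adj" "x \<in> e"
  shows "min_level e \<le> level x \<and> level x \<le> min_level e + 1"
proof -
  obtain u v where "e = {u, v}" "adj u v" using assms(1) unfolding edges_def by blast
  then show ?thesis
    using assms(2) level_adj adj_sym[of u v] unfolding min_level_def by fastforce
qed

lemma min_level_shift:
  assumes "e \<in> edges V adj"
  shows "min_level (shift k ` e) = min_level e + k"
proof -
  obtain u v where uv: "e = {u, v}" "u \<in> V" "v \<in> V" using assms unfolding edges_def by blast
  then show ?thesis unfolding min_level_def using level_shift by (simp add: min_add_distrib_left)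
qed

lemma adjacent_edges_min_level:
  assumes "e \<in> edges V adj" "e' \<in> edges V adj" "e \<inter> e' \<noteq> {}"
  shows "min_level e' \<le> min_level e + 1 \<and> min_level e \<le> min_level e' + 1"
proof -
  obtain w where "w \<in> e" "w \<in> e'" using assms(3) by blast
  then show ?thesis using edge_levels[OF assms(1)] edge_levels[OF assms(2)] by fastforce
qed

lemma finite_edge_band: "finite {e\<in>edges V adj. \<forall>x\<in>e. a \<le> level x \<and> level x \<le> b}"
proof (rule finite_subset)
  show "{e\<in>edges V adj. \<forall>x\<in>e. a \<le> level x \<and> level x \<le> b} \<subseteq> Pow {v\<in>V. a \<le> level v \<and> level v \<le> b}"
    using edge_vertices by blast
qed (simp add: finite_level_band)

text \<open>Number the finitely many edges with minimal level 0; an edge of minimal level m gets the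
  number of its translate to level 0, together with m mod 3, which separates adjacent edges of
  different minimal levels.\<close>
lemma finite_proper_coloring: "\<exists>k c. proper_edge_coloring V adj c \<and> c ` edges V adj \<subseteq> {..<k}"
proof -
  define E0 where "E0 = {e\<in>edges V adj. min_level e = 0}"
  have "E0 \<subseteq> {e\<in>edges V adj. \<forall>x\<in>e. 0 \<le> level x \<and> level x \<le> 1}"
    unfolding E0_def using edge_levels by fastforce
  then have "finite E0" using finite_edge_band finite_subset by blast
  then obtain idx :: "'a set \<Rightarrow> nat" and n where idx: "idx ` E0 = {i. i < n}" "inj_on idx E0"
    using finite_imp_inj_to_nat_seg by blast
  define normal where "normal e = shift (- min_level e) ` e" for e
  have normal_E0: "normal e \<in> E0" if "e \<in> edges V adj" for e
    using min_level_shift[OF that] shift_edge[OF that] unfolding E0_def normal_def by simp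
  define c where "c e = idx (normal e) * 3 + nat (min_level e mod 3)" for e
  have c_mod: "c e mod 3 = nat (min_level e mod 3)" and c_div: "c e div 3 = idx (normal e)" for e
    unfolding c_def by auto
  have "c e \<noteq> c e'"
    if e: "e \<in> edges V adj" "e' \<in> edges V adj" "e \<noteq> e'" "e \<inter> e' \<noteq> {}" for e e'
  proof
    assume eq: "c e = c e'"
    then have "nat (min_level e mod 3) = nat (min_level e' mod 3)" using c_mod by metis
    then have "min_level e mod 3 = min_level e' mod 3" by simp
    then have same_level: "min_level e = min_level e'"
      using adjacent_edges_min_level[OF e(1,2,4)] by presburger
    have "idx (normal e) = idx (normal e')" using eq c_div by metis
    then have "normal e = normal e'" using inj_onD[OF idx(2)] normal_E0 e(1,2) by blast
    then have "shift (- min_level e) ` e = shift (- min_level e) ` e'"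
      unfolding normal_def same_level .
    then show False using e(3) shift_image_inj edge_vertices e(1,2) by blast
  qed
  then have "proper_edge_coloring V adj c" unfolding proper_edge_coloring_def by blast
  moreover have "c ` edges V adj \<subseteq> {..<3 * n + 3}"
  proof
    fix y assume "y \<in> c ` edges V adj"
    then obtain e where e: "e \<in> edges V adj" "y = c e" by blast
    have "idx (normal e) < n" using normal_E0[OF e(1)] idx(1) by blast
    then show "y \<in> {..<3 * n + 3}" unfolding e(2) c_def by simp
  qed
  ultimately show ?thesis by blast
qed

text \<open>Pigeonhole: only finitely many colourings of the edges with levels in [0, 2] exist, so two
  translates of the window [b - 1, b + 1] by distinct shifts carry the same colours.\<close>
lemma colors_repeat_on_window:
  fixes c :: "'a set \<Rightarrow> nat"
  assumes colors: "c ` edges V adj \<subseteq> {..<k}"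
  shows "\<exists>b p. 0 < p \<and> (\<forall>x\<in>edges V adj. (\<forall>y\<in>x. b - 1 \<le> level y \<and> level y \<le> b + 1)
    \<longrightarrow> c (shift p ` x) = c x)"
proof -
  define W where "W = {e\<in>edges V adj. \<forall>x\<in>e. 0 \<le> level x \<and> level x \<le> 2}"
  define pattern where "pattern j = restrict (\<lambda>e. c (shift (int j) ` e)) W" for j :: nat
  have "range pattern \<subseteq> W \<rightarrow>\<^sub>E {..<k}"
  proof (clarsimp simp: pattern_def restrict_PiE_iff)
    fix j e assume "e \<in> W"
    then have "shift (int j) ` e \<in> edges V adj" using shift_edge unfolding W_def by blast
    then show "c (shift (int j) ` e) < k" using colors by blast
  qed
  moreover have "finite (W \<rightarrow>\<^sub>E {..<k})"
    using finite_edge_band unfolding W_def by (intro finite_PiE) auto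
  ultimately obtain i j where ij: "i < j" "pattern i = pattern j"
    by (rule finite_range_repeats)
  define b where "b = int i + 1"
  define p where "p = int j - int i"
  have "0 < p" using ij(1) unfolding p_def by simp
  moreover have "c (shift p ` x) = c x"
    if x: "x \<in> edges V adj" "\<forall>y\<in>x. b - 1 \<le> level y \<and> level y \<le> b + 1" for x
  proof -
    define e where "e = shift (- int i) ` x"
    have "0 \<le> level y \<and> level y \<le> 2" if y: "y \<in> e" for y
    proof -
      obtain z where z: "z \<in> x" "y = shift (- int i) z" using y unfolding e_def by blast
      then have "level y = level z - int i" using level_shift edge_vertices[OF x(1)] by auto
      moreover have "int i \<le> level z \<and> level z \<le> int i + 2" using x(2) z(1) unfolding b_def by auto
      ultimately show ?thesis by linarith
    qed
    then have "e \<in> W" unfolding W_def using shift_edge[OF x(1)] unfolding e_def by blast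
    then have "c (shift (int i) ` e) = c (shift (int j) ` e)"
      using fun_cong[OF ij(2), of e] unfolding pattern_def by simp
    moreover have "shift (int i) ` e = x" "shift p ` x = shift (int j) ` e"
      unfolding e_def p_def using shift_image_cancel shift_image_add edge_vertices[OF x(1)] by simp_all
    ultimately show ?thesis by simp
  qed
  ultimately show ?thesis by blast
qed

text \<open>Cut the levels into strips [b + t p, b + (t + 1) p) and colour every edge like its translate
  into the strip t = 0.\<close>
definition periodize :: "('a set \<Rightarrow> nat) \<Rightarrow> int \<Rightarrow> int \<Rightarrow> 'a set \<Rightarrow> nat" where
  "periodize c b p e = c (shift (- ((min_level e - b) div p * p)) ` e)"

lemma periodize_colors: "periodize c b p ` edges V adj \<subseteq> c ` edges V adj"
  unfolding periodize_def using shift_edge by blast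

lemma periodize_shift:
  assumes p: "0 < p" and e: "e \<in> edges V adj"
  shows "periodize c b p (shift (k * p) ` e) = periodize c b p e"
proof -
  have "p \<noteq> 0" using p by simp
  have "(min_level (shift (k * p) ` e) - b) div p = ((min_level e - b) + k * p) div p"
    using min_level_shift[OF e] by (simp add: algebra_simps)
  also have "\<dots> = k + (min_level e - b) div p" by (rule div_mult_self1[OF \<open>p \<noteq> 0\<close>])
  finally have "(min_level (shift (k * p) ` e) - b) div p = k + (min_level e - b) div p" .
  then show ?thesis
    unfolding periodize_def using shift_image_add[OF edge_vertices[OF e]] by (simp add: algebra_simps)
qed

text \<open>Near strip t, periodize agrees with the translate by - t p; at the two levels just outside
  the strip this is the window property.\<close>
lemma periodize_near_strip:
  fixes c :: "'a set \<Rightarrow> nat"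
  assumes p: "0 < p" and e: "e \<in> edges V adj"
    and window: "\<And>x. x \<in> edges V adj \<Longrightarrow> \<forall>y\<in>x. b - 1 \<le> level y \<and> level y \<le> b + 1 \<Longrightarrow>
      c (shift p ` x) = c x"
    and near: "b - 1 \<le> min_level e - t * p" "min_level e - t * p \<le> b + p"
  shows "periodize c b p e = c (shift (- (t * p)) ` e)"
proof -
  define e1 where "e1 = shift (- (t * p)) ` e"
  define m where "m = min_level e1"
  have e1: "e1 \<in> edges V adj" unfolding e1_def using shift_edge[OF e] .
  have m: "m = min_level e - t * p" unfolding m_def e1_def using min_level_shift[OF e] by simp
  have "(min_level e - b) div p = t + (m - b) div p"
    using div_mult_self1[of p "m - b" t] p unfolding m by (simp add: algebra_simps)
  then have "periodize c b p e = c (shift (- ((m - b) div p * p)) ` e1)"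
    unfolding periodize_def e1_def using shift_image_add[OF edge_vertices[OF e]]
    by (simp add: algebra_simps)
  moreover consider "b \<le> m \<and> m < b + p" | "m = b - 1" | "m = b + p"
    using near m by linarith
  then have "c (shift (- ((m - b) div p * p)) ` e1) = c e1"
  proof cases
    case 1
    then have "(m - b) div p = 0" by (simp add: div_pos_pos_trivial)
    then show ?thesis using shift_image_0[OF edge_vertices[OF e1]] by simp
  next
    case 2
    then have "(m - b) div p = -1" using p by (simp add: div_eq_minus1)
    moreover have "\<forall>y\<in>e1. b - 1 \<le> level y \<and> level y \<le> b + 1"
      using edge_levels[OF e1] 2 unfolding m_def by fastforce
    ultimately show ?thesis using window[OF e1] by simp
  next
    case 3
    then have "(m - b) div p = 1" using p by simp
    moreover have "min_level (shift (- p) ` e1) = b" using min_level_shift[OF e1, of "- p"] 3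
      unfolding m_def by simp
    then have "\<forall>y\<in>shift (- p) ` e1. b - 1 \<le> level y \<and> level y \<le> b + 1"
      using edge_levels[OF shift_edge[OF e1, of "- p"]] by fastforce
    then have "c (shift p ` shift (- p) ` e1) = c (shift (- p) ` e1)"
      using window[OF shift_edge[OF e1]] by blast
    ultimately show ?thesis using shift_image_cancel[OF edge_vertices[OF e1]] by simp
  qed
  ultimately show ?thesis unfolding e1_def by simp
qed

lemma periodize_proper:
  fixes c :: "'a set \<Rightarrow> nat"
  assumes proper: "proper_edge_coloring V adj c" and p: "0 < p"
    and window: "\<And>x. x \<in> edges V adj \<Longrightarrow> \<forall>y\<in>x. b - 1 \<le> level y \<and> level y \<le> b + 1 \<Longrightarrow>
      c (shift p ` x) = c x"
  shows "proper_edge_coloring V adj (periodize c b p)"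
  unfolding proper_edge_coloring_def
proof (intro ballI impI)
  fix e e' assume e: "e \<in> edges V adj" "e' \<in> edges V adj" and adjacent: "e \<noteq> e' \<and> e \<inter> e' \<noteq> {}"
  define t where "t = (min_level e - b) div p"
  have "t * p + (min_level e - b) mod p = min_level e - b"
    unfolding t_def by (rule div_mult_mod_eq)
  moreover have "0 \<le> (min_level e - b) mod p" "(min_level e - b) mod p < p" using p by simp_all
  ultimately have strip: "b \<le> min_level e - t * p" "min_level e - t * p < b + p" by linarith+
  have near: "min_level e' \<le> min_level e + 1 \<and> min_level e \<le> min_level e' + 1"
    using adjacent_edges_min_level[OF e] adjacent by blast
  have "periodize c b p e = c (shift (- (t * p)) ` e)"
    by (rule periodize_near_strip[OF p e(1)]) (use window strip in auto)
  moreover have "periodize c b p e' = c (shift (- (t * p)) ` e')"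
    by (rule periodize_near_strip[OF p e(2)]) (use window strip near in auto)
  moreover have "shift (- (t * p)) ` e \<noteq> shift (- (t * p)) ` e'"
    using adjacent shift_image_inj edge_vertices e by blast
  moreover have "shift (- (t * p)) ` e \<inter> shift (- (t * p)) ` e' \<noteq> {}" using adjacent by blast
  ultimately show "periodize c b p e \<noteq> periodize c b p e'"
    using proper shift_edge[OF e(1)] shift_edge[OF e(2)] unfolding proper_edge_coloring_def by auto
qed

lemma shift_invariant_periodic:
  assumes p: "0 < p" and invariant: "\<And>k e. e \<in> edges V adj \<Longrightarrow> c (shift (k * p) ` e) = c e"
  shows "periodic_coloring V adj c"
proof -
  define F where "F = {f. automorphism V adj f \<and> (\<forall>e\<in>edges V adj. c (f ` e) = c e)}"
  have shift_F: "shift (k * p) \<in> F" for k unfolding F_def using shift_automorphism invariant by blast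
  have comp_F: "f \<circ> f' \<in> F" if "f \<in> F" "f' \<in> F" for f f'
    using color_preserving_comp that unfolding F_def by blast
  define orb where "orb v = {f v | f. f \<in> F}" for v
  have orb_shift: "orb (shift (k * p) v) = orb v" if v: "v \<in> V" for k v
  proof -
    have cancel: "shift (- k * p) (shift (k * p) v) = v"
      using shift_add[OF v, of "- k * p" "k * p", symmetric] shift_0[OF v] by simp
    have "orb (shift (k * p) v) \<subseteq> orb v" if "v \<in> V" for k v
    proof
      fix y assume "y \<in> orb (shift (k * p) v)"
      then obtain f where "f \<in> F" "y = (f \<circ> shift (k * p)) v" unfolding orb_def by auto
      then show "y \<in> orb v" using comp_F[OF _ shift_F] unfolding orb_def by blast
    qed
    then show ?thesis using v cancel shift_vertex by (metis subset_antisym)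
  qed
  define R where "R = {v\<in>V. 0 \<le> level v \<and> level v \<le> p - 1}"
  have "orb v \<in> orb ` R" if v: "v \<in> V" for v
  proof -
    define k where "k = level v div p"
    have "k * p + level v mod p = level v" unfolding k_def by (rule div_mult_mod_eq)
    moreover have "0 \<le> level v mod p" "level v mod p < p" using p by simp_all
    ultimately have "shift (- k * p) v \<in> R"
      unfolding R_def using level_shift[OF v] shift_vertex[OF v] by auto
    moreover have "orb (shift (- k * p) v) = orb v" by (rule orb_shift[OF v])
    ultimately show ?thesis by (metis imageI)
  qed
  then have "orbits V F \<subseteq> orb ` R" unfolding orbits_def orb_def by blast
  moreover have "finite R" unfolding R_def using finite_level_band by blast
  ultimately show ?thesis unfolding periodic_coloring_def F_def[symmetric] by (meson finite_imageI finite_subset)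
qed

theorem periodic_optimal_coloring:
  "\<exists>c. proper_edge_coloring V adj c \<and> periodic_coloring V adj c \<and>
     c ` edges V adj \<subseteq> {..<chromatic_index V adj}"
proof -
  obtain c where c: "proper_edge_coloring V adj c" "c ` edges V adj \<subseteq> {..<chromatic_index V adj}"
    using chromatic_index_attained[OF finite_proper_coloring] by blast
  obtain b p where p: "0 < p" and window: "\<And>x. x \<in> edges V adj \<Longrightarrow>
      \<forall>y\<in>x. b - 1 \<le> level y \<and> level y \<le> b + 1 \<Longrightarrow> c (shift p ` x) = c x"
    using colors_repeat_on_window[OF c(2)] by blast
  have "proper_edge_coloring V adj (periodize c b p)"
    using periodize_proper[OF c(1) p window] .
  moreover have "periodic_coloring V adj (periodize c b p)"
    using shift_invariant_periodic[OF p periodize_shift[OF p]] .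
  moreover have "periodize c b p ` edges V adj \<subseteq> {..<chromatic_index V adj}"
    using periodize_colors c(2) by blast
  ultimately show ?thesis by blast
qed

end

sublocale translation \<subseteq> levels: translation_levels V adj shift level
  using shift_automorphism shift_add level_shift finite_level_band level_adj
  by unfold_locales auto

theorem corollary5p5:
  fixes V :: "'a set" and adj :: "'a \<Rightarrow> 'a \<Rightarrow> bool"
  assumes "graph V adj"
    and "connected_graph V adj"
    and "locally_finite V adj"
    and "quasi_transitive V adj"
    and "card (ends V adj) = 2"
  shows "\<exists>c. proper_edge_coloring V adj c \<and> periodic_coloring V adj c \<and>
             c ` edges V adj \<subseteq> {..<chromatic_index V adj}"
proof -
  interpret connected_lf_graph V adj using assms(1-3) by unfold_locales
  obtain g A S where "translation V adj g A S" using two_ended_translation[OF assms(4,5)] by blast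
  then interpret translation V adj g A S .
  show ?thesis by (rule levels.periodic_optimal_coloring)
qed

end
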